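(* Let $1\le l\le m$ and $0\le r\le\lfloor(m-l-1)/2\rfloor$, and put $k(r)=\sum_{i=0}^r\binom{m-l}{i}$. Then there exists a pure binary linear quantum convolutional stabilizer code with parameters $[(2^{m-l},\,2^{m-l}-2k(r),\,m')]_2$ for some $m'\le 2^{m-l}(2^l-1)$, and free distance $2^{r+1}$.
   Context: Quantum setup (here $q=2$, and $n,m'$ positive integers): $X(a)|x\rangle=|x+a\rangle$, $Z(b)|x\rangle=(-1)^{bx}|x\rangle$ on $\mathbf C^2$ for $a,b\in\mathbf F_2$, $I=X(0)$. $P_t$ is the group generated by $((t+1)n+m')$-fold tensor products of the $X(a),Z(b)$, with center $Z_t$; $P_\infty$ is the group of infinite tensor products with all but finitely many factors $I$. For abelian $S_0\le P_0$, $S_t=\langle N\otimes I^{\otimes n},I^{\otimes tn}\otimes M: N\in S_{t-1},M\in S_0\rangle$; conditions (S1) $I^{\otimes tn}\otimes M$ and $N\otimes I^{\otimes tn}$ commute for $M,N\in S_0$, $t\ge1$; (S2) $\dim_{\mathbf F_2}S_tZ_t/Z_t=(t+1)(n-k)$; (S3) $S_t\cap Z_t$ trivial. The $+1$-eigenspace of $S=\langle I^{\otimes tn}\otimes M\otimes I^{\otimes\infty}: t\ge0,M\in S_0\rangle$ is an $[(n,k,m')]_2$ convolutional stabilizer code. Weight of $E\in P_\infty$ = number of non-identity factors; free distance $d_f=\min\{\mathrm{wt}(e): e\in C_{P_\infty}(S)\setminus Z(P_\infty)S\}$; the code is pure if the stabilizer contains no non-scalar element of weight less than $d_f$. *)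

theory Defs
  imports "HOL-Algebra.Algebra"
begin

text \<open>A (possibly infinite) tensor product of single-qubit Pauli operators
  with a global sign is represented by a triple (s, a, b): it stands for the operator
  (-1)^s (X(a_0)Z(b_0)) tensor (X(a_1)Z(b_1)) tensor ... , where qubit j carries
  X(a_j)Z(b_j) (True = 1 in F_2, False = 0).  Every element of the group generated
  by tensor products of the X(a), Z(b) (q = 2) has this form uniquely, and
  multiplication follows from Z(b)X(a) = (-1)^(ab) X(a)Z(b).\<close>

type_synonym pauli = "bool \<times> (nat \<Rightarrow> bool) \<times> (nat \<Rightarrow> bool)"

definition pmult :: "pauli \<Rightarrow> pauli \<Rightarrow> pauli" where
  "pmult p q = (case p of (s, a, b) \<Rightarrow> case q of (s', a', b') \<Rightarrow>
     ((s \<noteq> s') \<noteq> odd (card {j. b j \<and> a' j}),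
      (\<lambda>j. a j \<noteq> a' j), (\<lambda>j. b j \<noteq> b' j)))"

definition pone :: pauli where
  "pone = (False, (\<lambda>_. False), (\<lambda>_. False))"

definition pauli_group :: "nat \<Rightarrow> pauli monoid" where
  "pauli_group N = \<lparr>carrier = {(s, a, b). \<forall>j\<ge>N. \<not> a j \<and> \<not> b j},
                     monoid.mult = pmult, one = pone\<rparr>"

definition pauli_inf :: "pauli monoid" where
  "pauli_inf = \<lparr>carrier = {(s, a, b). finite {j. a j \<or> b j}},
                monoid.mult = pmult, one = pone\<rparr>"

definition pweight :: "pauli \<Rightarrow> nat" where
  "pweight p = (case p of (s, a, b) \<Rightarrow> card {j. a j \<or> b j})"

text \<open>I^{tensor d} tensor E (shift by d qubits).\<close>
definition pshift :: "nat \<Rightarrow> pauli \<Rightarrow> pauli" where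
  "pshift d p = (case p of (s, a, b) \<Rightarrow>
     (s, (\<lambda>j. d \<le> j \<and> a (j - d)), (\<lambda>j. d \<le> j \<and> b (j - d))))"

definition gcenter :: "('a, 'b) monoid_scheme \<Rightarrow> 'a set" where
  "gcenter G = {x \<in> carrier G. \<forall>y \<in> carrier G. x \<otimes>\<^bsub>G\<^esub> y = y \<otimes>\<^bsub>G\<^esub> x}"

definition gcentralizer :: "('a, 'b) monoid_scheme \<Rightarrow> 'a set \<Rightarrow> 'a set" where
  "gcentralizer G S = {x \<in> carrier G. \<forall>y \<in> S. x \<otimes>\<^bsub>G\<^esub> y = y \<otimes>\<^bsub>G\<^esub> x}"

text \<open>F_2-dimension of an elementary abelian 2-group written multiplicatively:
  d is the cardinality of a basis, i.e. a finite generating set B such that no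
  nonempty subset of B multiplies to the identity (over F_2 a linear combination
  of basis vectors is exactly the product of a subset).\<close>
definition f2_dim_eq :: "('a, 'b) monoid_scheme \<Rightarrow> nat \<Rightarrow> bool" where
  "f2_dim_eq G d \<longleftrightarrow> (\<exists>B. B \<subseteq> carrier G \<and> finite B \<and> card B = d \<and>
       generate G B = carrier G \<and>
       (\<forall>C \<subseteq> B. finprod G (\<lambda>x. x) C = \<one>\<^bsub>G\<^esub> \<longrightarrow> C = {}))"

definition Pt :: "nat \<Rightarrow> nat \<Rightarrow> nat \<Rightarrow> pauli monoid" where
  "Pt n m' t = pauli_group ((t + 1) * n + m')"

text \<open>S_t = < N tensor I^n, I^{tn} tensor M : N in S_{t-1}, M in S_0 >.
  N tensor I^n is the same triple as N (trailing identities).\<close>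
fun St :: "nat \<Rightarrow> nat \<Rightarrow> pauli set \<Rightarrow> nat \<Rightarrow> pauli set" where
  "St n m' S0 0 = S0"
| "St n m' S0 (Suc t) = generate (Pt n m' (Suc t))
      (St n m' S0 t \<union> pshift (Suc t * n) ` S0)"

definition Sinf :: "nat \<Rightarrow> pauli set \<Rightarrow> pauli set" where
  "Sinf n S0 = generate pauli_inf {pshift (t * n) M | t M. M \<in> S0}"

definition conv_stab_code :: "nat \<Rightarrow> nat \<Rightarrow> nat \<Rightarrow> pauli set \<Rightarrow> bool" where
  "conv_stab_code n k m' S0 \<longleftrightarrow>
     0 < n \<and> 0 < m' \<and> k \<le> n \<and>
     subgroup S0 (Pt n m' 0) \<and>
     (\<forall>x \<in> S0. \<forall>y \<in> S0. pmult x y = pmult y x) \<and>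
     \<comment> \<open>(S1)\<close>
     (\<forall>t \<ge> 1. \<forall>M \<in> S0. \<forall>N \<in> S0.
        pmult (pshift (t * n) M) N = pmult N (pshift (t * n) M)) \<and>
     \<comment> \<open>(S2)\<close>
     (\<forall>t. f2_dim_eq
        ((Pt n m' t)\<lparr>carrier := set_mult (Pt n m' t) (St n m' S0 t) (gcenter (Pt n m' t))\<rparr>
           Mod (gcenter (Pt n m' t)))
        ((t + 1) * (n - k))) \<and>
     \<comment> \<open>(S3)\<close>
     (\<forall>t. St n m' S0 t \<inter> gcenter (Pt n m' t) = {pone})"

definition free_distance :: "nat \<Rightarrow> pauli set \<Rightarrow> nat" where
  "free_distance n S0 = Inf (pweight `
     (gcentralizer pauli_inf (Sinf n S0) - set_mult pauli_inf (gcenter pauli_inf) (Sinf n S0)))"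

definition pure_code :: "nat \<Rightarrow> pauli set \<Rightarrow> bool" where
  "pure_code n S0 \<longleftrightarrow>
     (\<forall>e \<in> Sinf n S0. e \<notin> gcenter pauli_inf \<longrightarrow> free_distance n S0 \<le> pweight e)"

end

theory Submission
  imports Defs "HOL-Library.Nat_Bijection"
begin

text \<open>Take n = 2^\<mu> qubits per block, \<mu> = m - l, memory m' = n, and index the qubits of a block by
  the subsets of {..<\<mu>}, i.e. by the points of F_2^\<mu>. The stabilizer is the CSS group whose X- and
  Z-parts are both spanned by the shifts of (1 + D) x_T: the evaluation vector of a monomial x_T of
  degree at most r, placed on two consecutive blocks. Since 2r < \<mu>, any two of these vectors overlap
  in an even number of qubits, so the group is abelian; they are linearly independent, which gives
  n - k = 2 (\<Sum>i = 0..r. \<mu> choose i).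

  An operator commuting with the stabilizer has X- and Z-parts orthogonal to all these vectors. Block by
  block this forces the parity of the overlap with each x_T to agree between consecutive blocks, hence to
  vanish, as it does beyond the support. So every nonzero block of such an operator is a nonzero word of
  RM(\<mu>-r-1, \<mu>), the dual of RM(r, \<mu>), and has weight at least 2^(r+1). One such word on a single block
  attains the bound and is not in the stabilizer, since it meets the last qubits of the blocks once while
  every generator meets them twice. Stabilizer elements commute with the stabilizer, which gives purity.\<close>

section \<open>Binary vectors\<close>

type_synonym bvec = "nat \<Rightarrow> bool"

abbreviation zero_vec :: bvec where
  "zero_vec \<equiv> (\<lambda>_. False)"

definition vec_add :: "bvec \<Rightarrow> bvec \<Rightarrow> bvec" where
  "vec_add u v = (\<lambda>j. u j \<noteq> v j)"

text \<open>Since the cardinality of an infinite set is 0, \<open>dot\<close> is only meaningful when the supports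
  meet in a finite set; the lemmas below assume finite supports.\<close>
definition dot :: "bvec \<Rightarrow> bvec \<Rightarrow> bool" where
  "dot u v = odd (card {j. u j \<and> v j})"

definition vec_sum :: "('i \<Rightarrow> bvec) \<Rightarrow> 'i set \<Rightarrow> bvec" where
  "vec_sum g D = (\<lambda>j. odd (card {i \<in> D. g i j}))"

definition vec_span :: "('i \<Rightarrow> bvec) \<Rightarrow> 'i set \<Rightarrow> bvec set" where
  "vec_span g C = {vec_sum g D | D. D \<subseteq> C \<and> finite D}"

lemma odd_card_sym_diff:
  assumes "finite A" "finite B"
  shows "odd (card (sym_diff A B)) \<longleftrightarrow> odd (card A) \<noteq> odd (card B)"
proof -
  have "card A = card (A \<inter> B) + card (A - B)" "card B = card (A \<inter> B) + card (B - A)"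
    using assms card_Int_Diff[of B A] by (simp_all add: card_Int_Diff Int_commute)
  moreover have "card (sym_diff A B) = card (A - B) + card (B - A)"
    using assms by (intro card_Un_disjoint) auto
  ultimately show ?thesis by presburger
qed

lemma dot_commute: "dot u v = dot v u"
  unfolding dot_def by (simp add: conj_commute)

lemma dot_vec_add_left:
  assumes "finite (Collect u)" "finite (Collect u')"
  shows "dot (vec_add u u') v \<longleftrightarrow> dot u v \<noteq> dot u' v"
proof -
  let ?A = "{j. u j \<and> v j}" and ?B = "{j. u' j \<and> v j}"
  have "finite ?A" "finite ?B" using assms by (auto intro: finite_subset)
  moreover have "{j. vec_add u u' j \<and> v j} = sym_diff ?A ?B"
    unfolding vec_add_def by auto
  ultimately show ?thesis unfolding dot_def by (simp add: odd_card_sym_diff)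
qed

lemma dot_vec_add_right:
  "finite (Collect u) \<Longrightarrow> finite (Collect u') \<Longrightarrow> dot v (vec_add u u') \<longleftrightarrow> dot v u \<noteq> dot v u'"
  using dot_vec_add_left dot_commute by metis

lemma dot_single: "dot u (\<lambda>i. i = j) \<longleftrightarrow> u j"
proof -
  have "{i. u i \<and> i = j} = (if u j then {j} else {})" by auto
  then show ?thesis unfolding dot_def by simp
qed

lemma finite_vec_add: "finite (Collect u) \<Longrightarrow> finite (Collect v) \<Longrightarrow> finite (Collect (vec_add u v))"
  unfolding vec_add_def by (rule finite_subset[of _ "Collect u \<union> Collect v"]) auto

lemma dot_zero_vec [simp]: "\<not> dot zero_vec v" "\<not> dot v zero_vec"
  unfolding dot_def by simp_all

lemma vec_add_zero_vec [simp]: "vec_add zero_vec v = v" "vec_add v zero_vec = v" "vec_add v v = zero_vec"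
  unfolding vec_add_def by auto

lemma vec_add_commute: "vec_add u v = vec_add v u"
  unfolding vec_add_def by auto

lemma vec_add_assoc: "vec_add (vec_add u v) w = vec_add u (vec_add v w)"
  unfolding vec_add_def by auto

lemma vec_sum_empty [simp]: "vec_sum g {} = zero_vec"
  unfolding vec_sum_def by simp

lemma vec_sum_insert:
  assumes "finite D" "i \<notin> D"
  shows "vec_sum g (insert i D) = vec_add (g i) (vec_sum g D)"
proof
  fix j
  have "{i' \<in> insert i D. g i' j} = (if g i j then insert i {i' \<in> D. g i' j} else {i' \<in> D. g i' j})"
    by auto
  then show "vec_sum g (insert i D) j = vec_add (g i) (vec_sum g D) j"
    using assms unfolding vec_sum_def vec_add_def by simp
qed

lemma vec_sum_singleton [simp]: "vec_sum g {i} = g i"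
  using vec_sum_insert[of "{}" i g] by simp

lemma finite_vec_sum:
  "finite D \<Longrightarrow> (\<And>i. i \<in> D \<Longrightarrow> finite (Collect (g i))) \<Longrightarrow> finite (Collect (vec_sum g D))"
  by (induction D rule: finite_induct) (auto simp: vec_sum_insert finite_vec_add)

lemma vec_sum_sym_diff:
  assumes "finite D" "finite D'"
  shows "vec_add (vec_sum g D) (vec_sum g D') = vec_sum g (sym_diff D D')"
proof
  fix j
  let ?A = "{i \<in> D. g i j}" and ?B = "{i \<in> D'. g i j}"
  have "{i \<in> sym_diff D D'. g i j} = sym_diff ?A ?B" by auto
  then show "vec_add (vec_sum g D) (vec_sum g D') j = vec_sum g (sym_diff D D') j"
    unfolding vec_sum_def vec_add_def using assms by (simp add: odd_card_sym_diff)
qed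

lemma vec_sum_reindex: "inj_on h D \<Longrightarrow> vec_sum g (h ` D) = vec_sum (g \<circ> h) D"
proof
  fix j
  assume "inj_on h D"
  moreover have "{i \<in> h ` D. g i j} = h ` {i \<in> D. g (h i) j}" by auto
  ultimately have "card {i \<in> h ` D. g i j} = card {i \<in> D. g (h i) j}"
    by (simp add: card_image inj_on_subset)
  then show "vec_sum g (h ` D) j = vec_sum (g \<circ> h) D j"
    unfolding vec_sum_def by simp
qed

lemma zero_in_vec_span: "zero_vec \<in> vec_span g C"
  unfolding vec_span_def by (rule CollectI, rule exI[of _ "{}"]) simp

lemma in_vec_span: "i \<in> C \<Longrightarrow> g i \<in> vec_span g C"
  unfolding vec_span_def by (rule CollectI, rule exI[of _ "{i}"]) simp

lemma vec_span_mono: "C \<subseteq> C' \<Longrightarrow> vec_span g C \<subseteq> vec_span g C'"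
  unfolding vec_span_def by blast

lemma vec_add_in_vec_span:
  assumes "u \<in> vec_span g C" "v \<in> vec_span g C"
  shows "vec_add u v \<in> vec_span g C"
proof -
  obtain D D' where "u = vec_sum g D" "D \<subseteq> C" "finite D" "v = vec_sum g D'" "D' \<subseteq> C" "finite D'"
    using assms unfolding vec_span_def by auto
  then show ?thesis
    unfolding vec_span_def using vec_sum_sym_diff[of D D' g] by blast
qed

lemma finite_vec_span:
  "u \<in> vec_span g C \<Longrightarrow> (\<And>i. i \<in> C \<Longrightarrow> finite (Collect (g i))) \<Longrightarrow> finite (Collect u)"
  unfolding vec_span_def using finite_vec_sum by blast

lemma dot_vec_span_left:
  assumes "u \<in> vec_span g C" "\<And>i. i \<in> C \<Longrightarrow> finite (Collect (g i))"
    and "\<And>i. i \<in> C \<Longrightarrow> \<not> dot (g i) v"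
  shows "\<not> dot u v"
proof -
  obtain D where D: "u = vec_sum g D" "D \<subseteq> C" "finite D"
    using assms(1) unfolding vec_span_def by auto
  have "\<not> dot (vec_sum g D) v" using D(3,2)
  proof (induction D rule: finite_induct)
    case (insert i D)
    then have "finite (Collect (vec_sum g D))" by (intro finite_vec_sum) (auto simp: assms(2))
    with insert show ?case by (simp add: vec_sum_insert dot_vec_add_left assms(2,3))
  qed simp
  then show ?thesis using D(1) by simp
qed

lemma vec_span_vanishes:
  assumes "u \<in> vec_span g C" "\<And>i. i \<in> C \<Longrightarrow> \<not> g i j"
  shows "\<not> u j"
proof -
  obtain D where u: "u = vec_sum g D" and "D \<subseteq> C" using assms(1) unfolding vec_span_def by blast
  then have "{i \<in> D. g i j} = {}" using assms(2) by blast
  then have "card {i \<in> D. g i j} = 0" by (simp only: card.empty)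
  then show ?thesis unfolding u vec_sum_def by simp
qed

lemma vec_sum_in_generate:
  assumes "finite D" "\<And>i. i \<in> D \<Longrightarrow> h (g i) \<in> generate G Y"
    and "h zero_vec = \<one>\<^bsub>G\<^esub>" "\<And>u v. h (vec_add u v) = h u \<otimes>\<^bsub>G\<^esub> h v"
  shows "h (vec_sum g D) \<in> generate G Y"
  using assms(1,2)
proof (induction D rule: finite_induct)
  case empty
  then show ?case using generate.one[of G Y] assms(3) by simp
next
  case (insert i D)
  then show ?case by (simp add: vec_sum_insert assms(4) generate.eng)
qed

definition shift_vec :: "nat \<Rightarrow> bvec \<Rightarrow> bvec" where
  "shift_vec d u = (\<lambda>j. d \<le> j \<and> u (j - d))"

lemma shift_vec_vec_sum: "shift_vec d (vec_sum g D) = vec_sum (\<lambda>i. shift_vec d (g i)) D"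
proof
  fix j
  show "shift_vec d (vec_sum g D) j = vec_sum (\<lambda>i. shift_vec d (g i)) D j"
    unfolding shift_vec_def vec_sum_def by (cases "d \<le> j") simp_all
qed

section \<open>Pauli operators\<close>

abbreviation pauli_on :: "pauli set \<Rightarrow> pauli monoid" where
  "pauli_on Q \<equiv> \<lparr>carrier = Q, monoid.mult = pmult, one = pone\<rparr>"

definition pauli_X :: "bvec \<Rightarrow> pauli" where
  "pauli_X a = (False, a, zero_vec)"

definition pauli_Z :: "bvec \<Rightarrow> pauli" where
  "pauli_Z b = (False, zero_vec, b)"

definition scalars :: "pauli set" where
  "scalars = {(s, zero_vec, zero_vec) | s. True}"

lemma pmult_eq: "pmult (s, a, b) (s', a', b') = ((s \<noteq> s') \<noteq> dot b a', vec_add a a', vec_add b b')"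
  unfolding pmult_def dot_def vec_add_def by simp

lemma pone_eq: "pone = (False, zero_vec, zero_vec)"
  unfolding pone_def by simp

lemma pshift_eq: "pshift d (s, a, b) = (s, shift_vec d a, shift_vec d b)"
  unfolding pshift_def shift_vec_def by simp

lemma pmult_pauli_X_Z: "pmult (pauli_X a) (pauli_Z b) = (False, a, b)"
  unfolding pauli_X_def pauli_Z_def by (simp add: pmult_eq)

lemma commute_pauli_X_iff: "pmult (s, a, b) (pauli_X v) = pmult (pauli_X v) (s, a, b) \<longleftrightarrow> \<not> dot b v"
  unfolding pauli_X_def by (auto simp: pmult_eq vec_add_commute)

lemma commute_pauli_Z_iff: "pmult (s, a, b) (pauli_Z v) = pmult (pauli_Z v) (s, a, b) \<longleftrightarrow> \<not> dot a v"
  unfolding pauli_Z_def by (auto simp: pmult_eq vec_add_commute dot_commute)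

definition pauli_closed :: "pauli set \<Rightarrow> bool" where
  "pauli_closed Q \<longleftrightarrow>
     (\<forall>s a b. (s, a, b) \<in> Q \<longrightarrow> finite (Collect a) \<and> finite (Collect b) \<and> (\<forall>s'. (s', a, b) \<in> Q)) \<and>
     pone \<in> Q \<and> (\<forall>x \<in> Q. \<forall>y \<in> Q. pmult x y \<in> Q)"

lemma group_pauli_on:
  assumes "pauli_closed Q"
  shows "group (pauli_on Q)"
proof (rule groupI; simp)
  show "\<And>x y. x \<in> Q \<Longrightarrow> y \<in> Q \<Longrightarrow> pmult x y \<in> Q" "pone \<in> Q"
    using assms unfolding pauli_closed_def by blast+
  show "\<And>x. pmult pone x = x"
    unfolding pone_def by (auto simp: pmult_eq)
  show "pmult (pmult x y) z = pmult x (pmult y z)" if "x \<in> Q" "y \<in> Q" "z \<in> Q" for x y z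
  proof -
    obtain s a b s' a' b' s'' a'' b'' where xyz: "x = (s, a, b)" "y = (s', a', b')" "z = (s'', a'', b'')"
      by (metis prod.exhaust)
    then have "finite (Collect a)" "finite (Collect b)" "finite (Collect a')" "finite (Collect b')"
      "finite (Collect a'')"
      using that assms unfolding pauli_closed_def by blast+
    then show ?thesis
      by (auto simp: xyz pmult_eq dot_vec_add_left dot_vec_add_right vec_add_assoc)
  qed
  show "\<exists>y \<in> Q. pmult y x = pone" if "x \<in> Q" for x
  proof -
    obtain s a b where x: "x = (s, a, b)" by (metis prod.exhaust)
    have "(s \<noteq> dot b a, a, b) \<in> Q" using that x assms unfolding pauli_closed_def by blast
    moreover have "pmult (s \<noteq> dot b a, a, b) x = pone"
      unfolding x pmult_eq pone_eq by auto
    ultimately show ?thesis by blast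
  qed
qed

lemma gcenter_pauli_on:
  assumes "pauli_closed Q" and scalars_Q: "scalars \<subseteq> Q"
    and single_Q: "\<And>s a b j. (s, a, b) \<in> Q \<Longrightarrow> a j \<or> b j \<Longrightarrow>
       pauli_X (\<lambda>i. i = j) \<in> Q \<and> pauli_Z (\<lambda>i. i = j) \<in> Q"
  shows "gcenter (pauli_on Q) = scalars"
proof (intro equalityI subsetI)
  fix x assume x: "x \<in> gcenter (pauli_on Q)"
  obtain s a b where xe: "x = (s, a, b)" by (metis prod.exhaust)
  have comm: "\<And>y. y \<in> Q \<Longrightarrow> pmult (s, a, b) y = pmult y (s, a, b)"
    using x unfolding gcenter_def xe by simp
  have "\<not> a j \<and> \<not> b j" for j
  proof (rule ccontr)
    let ?e = "\<lambda>i. i = j"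
    assume "\<not> (\<not> a j \<and> \<not> b j)"
    then have "pauli_X ?e \<in> Q" "pauli_Z ?e \<in> Q"
      using single_Q x xe unfolding gcenter_def by auto
    then have "\<not> dot b ?e" "\<not> dot a ?e"
      using comm commute_pauli_X_iff commute_pauli_Z_iff by blast+
    then show False using \<open>\<not> (\<not> a j \<and> \<not> b j)\<close> by (simp add: dot_single)
  qed
  then show "x \<in> scalars" unfolding scalars_def xe by auto
next
  fix x assume "x \<in> scalars"
  then show "x \<in> gcenter (pauli_on Q)"
    using scalars_Q unfolding gcenter_def scalars_def by (auto simp: pmult_eq)
qed

definition paulis_below :: "nat \<Rightarrow> pauli set" where
  "paulis_below N = {(s, a, b). \<forall>j\<ge>N. \<not> a j \<and> \<not> b j}"

definition paulis_finite :: "pauli set" where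
  "paulis_finite = {(s, a, b). finite {j. a j \<or> b j}}"

lemma Pt_eq: "Pt n m' t = pauli_on (paulis_below ((t + 1) * n + m'))"
  unfolding Pt_def pauli_group_def paulis_below_def by simp

lemma pauli_inf_eq: "pauli_inf = pauli_on paulis_finite"
  unfolding pauli_inf_def paulis_finite_def by simp

lemma mult_pauli_inf: "monoid.mult pauli_inf = pmult"
  by (simp add: pauli_inf_eq)

lemma pauli_closed_paulis_below: "pauli_closed (paulis_below N)"
  unfolding pauli_closed_def
proof (intro conjI allI impI ballI)
  fix s and a b :: bvec assume "(s, a, b) \<in> paulis_below N"
  then have "Collect a \<subseteq> {..<N}" "Collect b \<subseteq> {..<N}" "\<forall>j\<ge>N. \<not> a j \<and> \<not> b j"
    unfolding paulis_below_def using not_le by auto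
  then show "finite (Collect a)" "finite (Collect b)" "\<And>s'. (s', a, b) \<in> paulis_below N"
    unfolding paulis_below_def by (auto intro: finite_subset)
next
  fix x y assume "x \<in> paulis_below N" "y \<in> paulis_below N"
  then show "pmult x y \<in> paulis_below N"
    unfolding paulis_below_def by (auto simp: pmult_eq vec_add_def)
qed (simp add: pone_def paulis_below_def)

lemma mem_paulis_finite: "(s, a, b) \<in> paulis_finite \<longleftrightarrow> finite (Collect a) \<and> finite (Collect b)"
proof -
  have "{j. a j \<or> b j} = Collect a \<union> Collect b" by auto
  then show ?thesis unfolding paulis_finite_def by simp
qed

lemma pauli_closed_paulis_finite: "pauli_closed paulis_finite"
  unfolding pauli_closed_def
proof (intro conjI allI impI ballI)
  fix x y assume "x \<in> paulis_finite" "y \<in> paulis_finite"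
  then show "pmult x y \<in> paulis_finite"
    by (cases x, cases y) (simp add: pmult_eq mem_paulis_finite finite_vec_add)
qed (auto simp: mem_paulis_finite pone_eq)

lemma gcenter_Pt: "gcenter (Pt n m' t) = scalars"
  unfolding Pt_eq
  by (rule gcenter_pauli_on[OF pauli_closed_paulis_below])
     (auto simp: scalars_def paulis_below_def pauli_X_def pauli_Z_def not_le)

lemma gcenter_pauli_inf: "gcenter pauli_inf = scalars"
  unfolding pauli_inf_eq
  by (rule gcenter_pauli_on[OF pauli_closed_paulis_finite])
     (auto simp: scalars_def mem_paulis_finite pauli_X_def pauli_Z_def)

section \<open>CSS groups and their quotient by the scalars\<close>

definition css :: "bvec set \<Rightarrow> pauli set" where
  "css U = {(False, a, b) | a b. a \<in> U \<and> b \<in> U}"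

definition css_signed :: "bvec set \<Rightarrow> pauli set" where
  "css_signed U = {(s, a, b) | s a b. a \<in> U \<and> b \<in> U}"

definition self_orthogonal :: "bvec set \<Rightarrow> bool" where
  "self_orthogonal U \<longleftrightarrow> (\<forall>u \<in> U. \<forall>v \<in> U. \<not> dot u v)"

lemma css_mono: "U \<subseteq> V \<Longrightarrow> css U \<subseteq> css V"
  unfolding css_def by blast

lemma pauli_X_Z_in_css: "u \<in> vec_span g C \<Longrightarrow> pauli_X u \<in> css (vec_span g C) \<and> pauli_Z u \<in> css (vec_span g C)"
  unfolding css_def pauli_X_def pauli_Z_def using zero_in_vec_span by blast

lemma pmult_css:
  "self_orthogonal U \<Longrightarrow> b \<in> U \<Longrightarrow> a' \<in> U \<Longrightarrow>
     pmult (False, a, b) (False, a', b') = (False, vec_add a a', vec_add b b')"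
  unfolding self_orthogonal_def by (simp add: pmult_eq)

lemma css_commute:
  assumes "self_orthogonal U" "x \<in> css U" "y \<in> css U"
  shows "pmult x y = pmult y x"
  using assms unfolding css_def by (auto simp: pmult_css[OF assms(1)] vec_add_commute)

lemma subgroup_css:
  assumes Q: "pauli_closed Q" "css (vec_span g C) \<subseteq> Q" and orth: "self_orthogonal (vec_span g C)"
  shows "subgroup (css (vec_span g C)) (pauli_on Q)"
proof (rule group.subgroupI[OF group_pauli_on[OF Q(1)]])
  fix x y assume x: "x \<in> css (vec_span g C)" and y: "y \<in> css (vec_span g C)"
  then obtain a b a' b' where "x = (False, a, b)" "y = (False, a', b')"
    "a \<in> vec_span g C" "b \<in> vec_span g C" "a' \<in> vec_span g C" "b' \<in> vec_span g C"
    unfolding css_def by blast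
  then show "x \<otimes>\<^bsub>pauli_on Q\<^esub> y \<in> css (vec_span g C)"
    unfolding css_def by (auto simp: pmult_css[OF orth] vec_add_in_vec_span)
  have "x \<otimes>\<^bsub>pauli_on Q\<^esub> x = \<one>\<^bsub>pauli_on Q\<^esub>"
    using x unfolding css_def by (auto simp: pmult_css[OF orth] pone_eq)
  then have "inv\<^bsub>pauli_on Q\<^esub> x = x"
    using x Q(2) by (intro group.inv_equality[OF group_pauli_on[OF Q(1)]]) auto
  then show "inv\<^bsub>pauli_on Q\<^esub> x \<in> css (vec_span g C)" using x by simp
qed (use Q(2) pauli_X_Z_in_css[OF zero_in_vec_span] in auto)

lemma generate_css:
  assumes Q: "pauli_closed Q" "css (vec_span g C) \<subseteq> Q" and orth: "self_orthogonal (vec_span g C)"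
    and gens: "\<And>i. i \<in> C \<Longrightarrow> pauli_X (g i) \<in> Y \<and> pauli_Z (g i) \<in> Y"
    and Y: "Y \<subseteq> css (vec_span g C)"
  shows "generate (pauli_on Q) Y = css (vec_span g C)"
proof
  show "generate (pauli_on Q) Y \<subseteq> css (vec_span g C)"
    by (rule group.generate_subgroup_incl[OF group_pauli_on[OF Q(1)] Y subgroup_css[OF Q orth]])
  show "css (vec_span g C) \<subseteq> generate (pauli_on Q) Y"
  proof
    fix x assume "x \<in> css (vec_span g C)"
    then obtain D D' where x: "x = (False, vec_sum g D, vec_sum g D')"
      and D: "finite D" "D \<subseteq> C" "finite D'" "D' \<subseteq> C"
      unfolding css_def vec_span_def by blast
    have "pauli_X (vec_sum g D) \<in> generate (pauli_on Q) Y"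
    proof (rule vec_sum_in_generate[OF D(1)])
      show "pauli_X (g i) \<in> generate (pauli_on Q) Y" if "i \<in> D" for i
        using that D(2) gens by (blast intro: generate.incl)
    qed (simp_all add: pauli_X_def pone_eq pmult_eq)
    moreover have "pauli_Z (vec_sum g D') \<in> generate (pauli_on Q) Y"
    proof (rule vec_sum_in_generate[OF D(3)])
      show "pauli_Z (g i) \<in> generate (pauli_on Q) Y" if "i \<in> D'" for i
        using that D(4) gens by (blast intro: generate.incl)
    qed (simp_all add: pauli_Z_def pone_eq pmult_eq)
    ultimately have "pauli_X (vec_sum g D) \<otimes>\<^bsub>pauli_on Q\<^esub> pauli_Z (vec_sum g D') \<in> generate (pauli_on Q) Y"
      by (rule generate.eng)
    then show "x \<in> generate (pauli_on Q) Y" by (simp add: x pmult_pauli_X_Z)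
  qed
qed

lemma set_mult_css_scalars:
  assumes "monoid.mult H = pmult"
  shows "set_mult H (css U) scalars = css_signed U" and "set_mult H scalars (css U) = css_signed U"
proof -
  have right: "pmult (False, a, b) (s, zero_vec, zero_vec) = (s, a, b)"
    and left: "pmult (s, zero_vec, zero_vec) (False, a, b) = (s, a, b)" for s a b
    by (simp_all add: pmult_eq)
  show "set_mult H (css U) scalars = css_signed U"
  proof (intro equalityI subsetI)
    fix x assume "x \<in> set_mult H (css U) scalars"
    then show "x \<in> css_signed U"
      unfolding set_mult_def assms css_def scalars_def css_signed_def by (auto simp: right)
  next
    fix x assume "x \<in> css_signed U"
    then obtain s a b where "x = (s, a, b)" "a \<in> U" "b \<in> U" unfolding css_signed_def by blast
    then show "x \<in> set_mult H (css U) scalars"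
      unfolding set_mult_def assms css_def scalars_def using right[symmetric] by blast
  qed
  show "set_mult H scalars (css U) = css_signed U"
  proof (intro equalityI subsetI)
    fix x assume "x \<in> set_mult H scalars (css U)"
    then show "x \<in> css_signed U"
      unfolding set_mult_def assms css_def scalars_def css_signed_def by (auto simp: left)
  next
    fix x assume "x \<in> css_signed U"
    then obtain s a b where "x = (s, a, b)" "a \<in> U" "b \<in> U" unfolding css_signed_def by blast
    then show "x \<in> set_mult H scalars (css U)"
      unfolding set_mult_def assms css_def scalars_def using left[symmetric] by blast
  qed
qed

lemma css_subset_paulis_finite:
  "(\<And>i. i \<in> C \<Longrightarrow> finite (Collect (g i))) \<Longrightarrow> css (vec_span g C) \<subseteq> paulis_finite"
  unfolding css_def by (auto simp: mem_paulis_finite finite_vec_span)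

definition sign_class :: "bvec \<Rightarrow> bvec \<Rightarrow> pauli set" where
  "sign_class a b = {(s, a, b) | s. True}"

lemma sign_class_inject: "sign_class a b = sign_class a' b' \<Longrightarrow> a = a' \<and> b = b'"
  unfolding sign_class_def by blast

lemma scalars_eq_sign_class: "scalars = sign_class zero_vec zero_vec"
  unfolding scalars_def sign_class_def ..

lemma r_coset_scalars:
  assumes "monoid.mult H = pmult"
  shows "scalars #>\<^bsub>H\<^esub> (s, a, b) = sign_class a b"
proof (intro equalityI subsetI)
  fix x assume "x \<in> scalars #>\<^bsub>H\<^esub> (s, a, b)"
  then obtain s' where "x = pmult (s', zero_vec, zero_vec) (s, a, b)"
    unfolding r_coset_def assms scalars_def by blast
  then show "x \<in> sign_class a b" unfolding sign_class_def by (simp add: pmult_eq)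
next
  fix x assume "x \<in> sign_class a b"
  then obtain s' where "x = (s', a, b)" unfolding sign_class_def by blast
  then have "x = pmult (s' \<noteq> s, zero_vec, zero_vec) (s, a, b)" by (cases s) (simp_all add: pmult_eq)
  then show "x \<in> scalars #>\<^bsub>H\<^esub> (s, a, b)" unfolding r_coset_def assms scalars_def by blast
qed

lemma set_mult_sign_class:
  assumes "monoid.mult H = pmult"
  shows "sign_class a b <#>\<^bsub>H\<^esub> sign_class a' b' = sign_class (vec_add a a') (vec_add b b')"
proof (intro equalityI subsetI)
  fix x assume "x \<in> sign_class a b <#>\<^bsub>H\<^esub> sign_class a' b'"
  then show "x \<in> sign_class (vec_add a a') (vec_add b b')"
    unfolding set_mult_def assms sign_class_def by (auto simp: pmult_eq)
next
  fix x assume "x \<in> sign_class (vec_add a a') (vec_add b b')"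
  then obtain s where x: "x = (s, vec_add a a', vec_add b b')" unfolding sign_class_def by blast
  then have "x = pmult (s \<noteq> dot b a', a, b) (False, a', b')" by (auto simp: pmult_eq)
  then show "x \<in> sign_class a b <#>\<^bsub>H\<^esub> sign_class a' b'"
    unfolding set_mult_def assms sign_class_def by blast
qed

locale css_quotient =
  fixes H :: "pauli monoid" and g :: "'i \<Rightarrow> bvec" and C :: "'i set"
  assumes mult_H: "monoid.mult H = pmult"
    and carrier_H: "carrier H = css_signed (vec_span g C)"
    and finite_C: "finite C"
    and independent: "\<And>J. J \<subseteq> C \<Longrightarrow> vec_sum g J = zero_vec \<Longrightarrow> J = {}"
begin

abbreviation G :: "pauli set monoid" where
  "G \<equiv> H Mod scalars"

lemmas set_mult_sign_class_H [simp] = set_mult_sign_class[OF mult_H]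

lemma one_G: "\<one>\<^bsub>G\<^esub> = sign_class zero_vec zero_vec"
  by (simp add: scalars_eq_sign_class)

lemma carrier_G: "carrier G = {sign_class a b | a b. a \<in> vec_span g C \<and> b \<in> vec_span g C}"
proof -
  have "(\<lambda>x. scalars #>\<^bsub>H\<^esub> x) ` css_signed (vec_span g C)
      = {sign_class a b | a b. a \<in> vec_span g C \<and> b \<in> vec_span g C}"
  proof (intro equalityI subsetI)
    fix y assume "y \<in> (\<lambda>x. scalars #>\<^bsub>H\<^esub> x) ` css_signed (vec_span g C)"
    then obtain s a b where "y = scalars #>\<^bsub>H\<^esub> (s, a, b)" "a \<in> vec_span g C" "b \<in> vec_span g C"
      unfolding css_signed_def by blast
    then show "y \<in> {sign_class a b | a b. a \<in> vec_span g C \<and> b \<in> vec_span g C}"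
      by (auto simp: r_coset_scalars[OF mult_H])
  next
    fix y assume "y \<in> {sign_class a b | a b. a \<in> vec_span g C \<and> b \<in> vec_span g C}"
    then obtain a b where y: "y = sign_class a b" "a \<in> vec_span g C" "b \<in> vec_span g C" by blast
    then have "y = scalars #>\<^bsub>H\<^esub> (False, a, b)" by (simp add: r_coset_scalars[OF mult_H])
    moreover have "(False, a, b) \<in> css_signed (vec_span g C)" using y unfolding css_signed_def by blast
    ultimately show "y \<in> (\<lambda>x. scalars #>\<^bsub>H\<^esub> x) ` css_signed (vec_span g C)" by blast
  qed
  then show ?thesis unfolding carrier_FactGroup carrier_H .
qed

lemma sign_class_in_G: "a \<in> vec_span g C \<Longrightarrow> b \<in> vec_span g C \<Longrightarrow> sign_class a b \<in> carrier G"
  unfolding carrier_G by blast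

lemma comm_group_G: "comm_group G"
proof (rule comm_groupI)
  fix x y z assume "x \<in> carrier G" "y \<in> carrier G" "z \<in> carrier G"
  then obtain a b a' b' a'' b'' where
    xyz: "x = sign_class a b" "y = sign_class a' b'" "z = sign_class a'' b''"
    and span: "a \<in> vec_span g C" "b \<in> vec_span g C" "a' \<in> vec_span g C" "b' \<in> vec_span g C"
    unfolding carrier_G by blast
  show "x \<otimes>\<^bsub>G\<^esub> y \<in> carrier G"
    unfolding xyz using span by (simp add: sign_class_in_G vec_add_in_vec_span)
  show "x \<otimes>\<^bsub>G\<^esub> y = y \<otimes>\<^bsub>G\<^esub> x" unfolding xyz by (simp add: vec_add_commute)
  show "x \<otimes>\<^bsub>G\<^esub> y \<otimes>\<^bsub>G\<^esub> z = x \<otimes>\<^bsub>G\<^esub> (y \<otimes>\<^bsub>G\<^esub> z)" unfolding xyz by (simp add: vec_add_assoc)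
  show "\<one>\<^bsub>G\<^esub> \<otimes>\<^bsub>G\<^esub> x = x" unfolding xyz one_G by simp
  have "x \<otimes>\<^bsub>G\<^esub> x = \<one>\<^bsub>G\<^esub>" unfolding xyz one_G by simp
  then show "\<exists>x' \<in> carrier G. x' \<otimes>\<^bsub>G\<^esub> x = \<one>\<^bsub>G\<^esub>" using \<open>x \<in> carrier G\<close> by blast
next
  show "\<one>\<^bsub>G\<^esub> \<in> carrier G" unfolding one_G by (intro sign_class_in_G zero_in_vec_span)
qed

lemma comm_monoid_G: "comm_monoid G"
  using comm_group_G by (rule comm_group.axioms(1))

definition basis :: "bool \<times> 'i \<Rightarrow> pauli set" where
  "basis x = (if fst x then sign_class zero_vec (g (snd x)) else sign_class (g (snd x)) zero_vec)"

lemma basis_simps [simp]: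
  "basis (False, i) = sign_class (g i) zero_vec" "basis (True, i) = sign_class zero_vec (g i)"
  unfolding basis_def by simp_all

lemma basis_in_G:
  assumes "x \<in> UNIV \<times> C"
  shows "basis x \<in> carrier G"
proof -
  obtain z i where "x = (z, i)" "i \<in> C" using assms by auto
  then show ?thesis by (cases z) (simp_all add: sign_class_in_G in_vec_span zero_in_vec_span)
qed

lemma inj_on_basis: "inj_on basis (UNIV \<times> C)"
proof (rule inj_onI)
  fix x y assume x: "x \<in> UNIV \<times> C" and y: "y \<in> UNIV \<times> C" and eq: "basis x = basis y"
  obtain z i z' i' where xy: "x = (z, i)" "y = (z', i')" "i \<in> C" "i' \<in> C" using x y by auto
  have nonzero: "g j \<noteq> zero_vec" if "j \<in> C" for j
    using independent[of "{j}"] that by auto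
  have "z = z' \<and> g i = g i'"
    using eq nonzero[OF xy(3)] nonzero[OF xy(4)] unfolding xy
    by (cases z; cases z') (simp_all, (metis sign_class_inject)+)
  moreover have "i = i'"
  proof (rule ccontr)
    assume "i \<noteq> i'"
    then have "vec_sum g {i, i'} = zero_vec" using calculation by (simp add: vec_sum_insert)
    then show False using independent[of "{i, i'}"] xy by auto
  qed
  ultimately show "x = y" using xy by simp
qed

lemma generate_basis: "generate G (basis ` (UNIV \<times> C)) = carrier G"
proof
  let ?B = "basis ` (UNIV \<times> C)"
  show "generate G ?B \<subseteq> carrier G"
    using basis_in_G by (intro group.generate_incl[OF comm_group.axioms(2)[OF comm_group_G]]) auto
  have gen_X: "sign_class (vec_sum g D) zero_vec \<in> generate G ?B"
    and gen_Z: "sign_class zero_vec (vec_sum g D) \<in> generate G ?B" if D: "finite D" "D \<subseteq> C" for D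
  proof -
    have incl: "basis (False, i) \<in> generate G ?B" "basis (True, i) \<in> generate G ?B" if "i \<in> D" for i
      using that D(2) by (intro generate.incl imageI; auto)+
    show "sign_class (vec_sum g D) zero_vec \<in> generate G ?B"
      by (rule vec_sum_in_generate[OF D(1), where h = "\<lambda>u. sign_class u zero_vec"])
         (use incl in \<open>simp_all add: scalars_eq_sign_class\<close>)
    show "sign_class zero_vec (vec_sum g D) \<in> generate G ?B"
      by (rule vec_sum_in_generate[OF D(1), where h = "\<lambda>u. sign_class zero_vec u"])
         (use incl in \<open>simp_all add: scalars_eq_sign_class\<close>)
  qed
  show "carrier G \<subseteq> generate G ?B"
  proof
    fix x assume "x \<in> carrier G"
    then obtain a b where "x = sign_class a b" "a \<in> vec_span g C" "b \<in> vec_span g C"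
      unfolding carrier_G by blast
    then obtain D D' where x: "x = sign_class (vec_sum g D) (vec_sum g D')"
      and "finite D" "D \<subseteq> C" "finite D'" "D' \<subseteq> C"
      unfolding vec_span_def by blast
    then have "sign_class (vec_sum g D) zero_vec \<otimes>\<^bsub>G\<^esub> sign_class zero_vec (vec_sum g D')
        \<in> generate G ?B"
      by (intro generate.eng gen_X gen_Z)
    then show "x \<in> generate G ?B" unfolding x by simp
  qed
qed

lemma finprod_basis:
  assumes "finite E" "E \<subseteq> UNIV \<times> C"
  shows "finprod G basis E = sign_class (vec_sum g {i. (False, i) \<in> E}) (vec_sum g {i. (True, i) \<in> E})"
  using assms
proof (induction E rule: finite_induct)
  case empty
  then show ?case using comm_monoid.finprod_empty[OF comm_monoid_G] by (simp add: scalars_eq_sign_class)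
next
  case (insert x E)
  obtain z i where x: "x = (z, i)" by (cases x)
  have sum_insert: "vec_sum g {i'. (z, i') \<in> insert x E} = vec_add (g i) (vec_sum g {i'. (z, i') \<in> E})"
  proof -
    have "finite {i'. (z, i') \<in> E}"
      using insert(1) by (rule finite_subset[rotated, OF finite_imageI[of _ snd]]) force
    moreover have "{i'. (z, i') \<in> insert x E} = insert i {i'. (z, i') \<in> E}" "i \<notin> {i'. (z, i') \<in> E}"
      using x insert(2) by auto
    ultimately show ?thesis by (metis vec_sum_insert)
  qed
  have other: "{i'. (\<not> z, i') \<in> insert x E} = {i'. (\<not> z, i') \<in> E}" using x by auto
  have "basis \<in> E \<rightarrow> carrier G" "basis x \<in> carrier G"
    using insert.prems basis_in_G by auto
  then have "finprod G basis (insert x E) = basis x \<otimes>\<^bsub>G\<^esub> finprod G basis E"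
    by (rule comm_monoid.finprod_insert[OF comm_monoid_G insert(1,2)])
  then show ?case using insert.IH insert.prems sum_insert other
    by (cases z) (simp_all add: x)
qed

lemma basis_independent:
  assumes "B' \<subseteq> basis ` (UNIV \<times> C)" "finprod G (\<lambda>x. x) B' = \<one>\<^bsub>G\<^esub>"
  shows "B' = {}"
proof -
  define E where "E = {x \<in> UNIV \<times> C. basis x \<in> B'}"
  have E: "E \<subseteq> UNIV \<times> C" unfolding E_def by blast
  have B': "B' = basis ` E" unfolding E_def using assms(1) by blast
  have "finite E" using finite_subset[OF E] finite_C by simp
  have "(\<lambda>x. x) \<in> basis ` E \<rightarrow> carrier G" using E basis_in_G by auto
  moreover have "inj_on basis E" using inj_on_basis E by (rule inj_on_subset)
  ultimately have "finprod G (\<lambda>x. x) B' = finprod G basis E"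
    unfolding B' by (rule comm_monoid.finprod_reindex[OF comm_monoid_G])
  then have "finprod G basis E = \<one>\<^bsub>G\<^esub>" using assms(2) by (rule trans[OF sym])
  then have "sign_class (vec_sum g {i. (False, i) \<in> E}) (vec_sum g {i. (True, i) \<in> E})
      = sign_class zero_vec zero_vec"
    unfolding finprod_basis[OF \<open>finite E\<close> E] one_G .
  then have "vec_sum g {i. (z, i) \<in> E} = zero_vec" for z
    by (cases z) (auto dest: sign_class_inject)
  moreover have "{i. (z, i) \<in> E} \<subseteq> C" for z using E by auto
  ultimately have "{i. (z, i) \<in> E} = {}" for z using independent by blast
  then have "E = {}" by (metis equals0I empty_Collect_eq prod.collapse)
  then show ?thesis using B' by simp
qed

lemma f2_dim_G: "f2_dim_eq G (2 * card C)"
  unfolding f2_dim_eq_def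
proof (intro exI conjI)
  show "basis ` (UNIV \<times> C) \<subseteq> carrier G" using basis_in_G by auto
  show "finite (basis ` (UNIV \<times> C))" using finite_C by simp
  show "card (basis ` (UNIV \<times> C)) = 2 * card C"
    by (simp add: card_image[OF inj_on_basis] card_cartesian_product)
qed (use generate_basis basis_independent in auto)

end

section \<open>A parity bound for families of subsets\<close>

lemma set_encode_lessThan: "set_encode {..<\<mu>} = 2 ^ \<mu> - 1"
proof (induction \<mu>)
  case (Suc \<mu>)
  have "{..<Suc \<mu>} = insert \<mu> {..<\<mu>}" by auto
  then show ?case using Suc by simp
qed simp

lemma set_decode_subset_lessThan_iff: "set_decode p \<subseteq> {..<\<mu>} \<longleftrightarrow> p < 2 ^ \<mu>"
proof
  assume "set_decode p \<subseteq> {..<\<mu>}"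
  then have "p \<le> set_encode {..<\<mu>}"
    by (intro subset_decode_imp_le) simp
  moreover have "(0::nat) < 2 ^ \<mu>" by simp
  ultimately show "p < 2 ^ \<mu>" unfolding set_encode_lessThan by linarith
next
  assume p: "p < 2 ^ \<mu>"
  show "set_decode p \<subseteq> {..<\<mu>}"
  proof
    fix k assume "k \<in> set_decode p"
    then have "p div 2 ^ k \<noteq> 0" unfolding set_decode_def by (metis even_zero mem_Collect_eq)
    then have "2 ^ k \<le> p" by (simp add: div_eq_0_iff not_less)
    then have "(2 :: nat) ^ k < 2 ^ \<mu>" using p by linarith
    then show "k \<in> {..<\<mu>}" by simp
  qed
qed

lemma bij_betw_set_decode: "bij_betw set_decode {..<2 ^ \<mu>} (Pow {..<\<mu>})"
proof (rule bij_betw_imageI)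
  show "inj_on set_decode {..<2 ^ \<mu>}" by (metis inj_onI set_decode_inverse)
  show "set_decode ` {..<2 ^ \<mu>} = Pow {..<\<mu>}"
  proof (intro equalityI subsetI)
    fix A assume A: "A \<in> Pow {..<\<mu>}"
    then have "finite A" by (auto intro: finite_subset)
    then have "set_encode A < 2 ^ \<mu>"
      using A set_decode_subset_lessThan_iff[of "set_encode A"] by simp
    then show "A \<in> set_decode ` {..<2 ^ \<mu>}"
      using \<open>finite A\<close> by (intro rev_image_eqI[of "set_encode A"]) simp_all
  qed (use set_decode_subset_lessThan_iff in blast)
qed

lemma card_set_decode_Collect:
  "card {p. p < 2 ^ \<mu> \<and> P (set_decode p)} = card {A. A \<subseteq> {..<\<mu>} \<and> P A}"
proof -
  have "bij_betw set_decode {p \<in> {..<2 ^ \<mu>}. P (set_decode p)} {A \<in> Pow {..<\<mu>}. P A}"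
    using bij_betw_set_decode by (rule bij_betw_Collect) (simp add: bij_betw_def)
  then show ?thesis by (simp add: bij_betw_same_card)
qed

lemma card_supersets_decode:
  assumes "W \<subseteq> {..<\<mu>}"
  shows "card {p. p < 2 ^ \<mu> \<and> W \<subseteq> set_decode p} = 2 ^ (\<mu> - card W)"
proof -
  have "bij_betw (\<lambda>A. A - W) {A. A \<subseteq> {..<\<mu>} \<and> W \<subseteq> A} (Pow ({..<\<mu>} - W))"
    by (rule bij_betw_byWitness[where f' = "\<lambda>B. B \<union> W"]) (use assms in auto)
  then have "card {A. A \<subseteq> {..<\<mu>} \<and> W \<subseteq> A} = 2 ^ card ({..<\<mu>} - W)"
    by (simp add: bij_betw_same_card card_Pow)
  moreover have "card ({..<\<mu>} - W) = \<mu> - card W"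
    using assms by (simp add: card_Diff_subset finite_subset)
  ultimately show ?thesis by (simp add: card_set_decode_Collect)
qed

text \<open>The indicator of S, a Boolean function on F_2^\<mu>, is orthogonal to every monomial of degree
  below r, i.e. it lies in RM(\<mu>-r, \<mu>); its minimum distance 2^r is the bound proved below, by the
  (u | u + v) decomposition along the last coordinate.\<close>
definition parity_family :: "nat \<Rightarrow> nat \<Rightarrow> nat set set \<Rightarrow> bool" where
  "parity_family \<mu> r S \<longleftrightarrow>
     S \<subseteq> Pow {..<\<mu>} \<and> (\<forall>T \<subseteq> {..<\<mu>}. card T < r \<longrightarrow> even (card {P \<in> S. T \<subseteq> P}))"

lemma finite_parity_family: "parity_family \<mu> r S \<Longrightarrow> finite S"
  unfolding parity_family_def by (auto intro: finite_subset)

lemma parity_familyD: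
  "parity_family \<mu> r S \<Longrightarrow> T \<subseteq> {..<\<mu>} \<Longrightarrow> card T < r \<Longrightarrow> even (card {P \<in> S. T \<subseteq> P})"
  unfolding parity_family_def by blast

lemma parity_family_subset: "parity_family \<mu> r S \<Longrightarrow> S \<subseteq> Pow {..<\<mu>}"
  unfolding parity_family_def by blast

lemma card_supersets_split:
  assumes "finite S" "\<mu> \<notin> T"
  defines "A \<equiv> {P \<in> S. \<mu> \<notin> P}" and "B \<equiv> (\<lambda>P. P - {\<mu>}) ` {P \<in> S. \<mu> \<in> P}"
  shows "card {P \<in> B. T \<subseteq> P} = card {P \<in> S. insert \<mu> T \<subseteq> P}"
    and "card {P \<in> S. T \<subseteq> P} = card {P \<in> A. T \<subseteq> P} + card {P \<in> B. T \<subseteq> P}"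
proof -
  have "{P \<in> B. T \<subseteq> P} = (\<lambda>P. P - {\<mu>}) ` {P \<in> S. insert \<mu> T \<subseteq> P}"
    unfolding B_def using assms(2) by auto
  moreover have "inj_on (\<lambda>P. P - {\<mu>}) {P \<in> S. insert \<mu> T \<subseteq> P}"
    by (rule inj_onI) (metis insert_Diff insert_subset mem_Collect_eq)
  ultimately show B: "card {P \<in> B. T \<subseteq> P} = card {P \<in> S. insert \<mu> T \<subseteq> P}"
    by (simp only: card_image)
  have "{P \<in> S. T \<subseteq> P} = {P \<in> A. T \<subseteq> P} \<union> {P \<in> S. insert \<mu> T \<subseteq> P}"
    unfolding A_def by auto
  then show "card {P \<in> S. T \<subseteq> P} = card {P \<in> A. T \<subseteq> P} + card {P \<in> B. T \<subseteq> P}"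
    using assms(1) B by (simp add: A_def card_Un_disjoint disjoint_iff)
qed

lemma parity_family_split:
  assumes S: "parity_family (Suc \<mu>) (Suc r) S"
  defines "A \<equiv> {P \<in> S. \<mu> \<notin> P}" and "B \<equiv> (\<lambda>P. P - {\<mu>}) ` {P \<in> S. \<mu> \<in> P}"
  shows "card S = card A + card B" and "parity_family \<mu> r A" and "parity_family \<mu> r B"
    and "parity_family \<mu> (Suc r) (sym_diff A B)"
proof -
  note count = card_supersets_split[OF finite_parity_family[OF S], of \<mu>, folded A_def B_def]
  have "P - {\<mu>} \<subseteq> {..<\<mu>}" if "P \<in> S" for P
    using parity_family_subset[OF S] that by (auto simp: subset_eq less_Suc_eq)
  then have sub: "A \<subseteq> Pow {..<\<mu>}" "B \<subseteq> Pow {..<\<mu>}"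
    unfolding A_def B_def by auto
  then have "finite A" "finite B" by (auto intro: finite_subset)
  have even_AB: "even (card {P \<in> A. T \<subseteq> P} + card {P \<in> B. T \<subseteq> P})"
    if "T \<subseteq> {..<\<mu>}" "card T < Suc r" for T
  proof -
    have "\<mu> \<notin> T" "T \<subseteq> {..<Suc \<mu>}" using that(1) by auto
    then show ?thesis using parity_familyD[OF S, of T] count(2)[of T] that(2) by simp
  qed
  have even_B: "even (card {P \<in> B. T \<subseteq> P})" if "T \<subseteq> {..<\<mu>}" "card T < r" for T
  proof -
    have "finite T" "\<mu> \<notin> T" using that(1) by (auto intro: finite_subset)
    then have "even (card {P \<in> S. insert \<mu> T \<subseteq> P})"
      using that by (intro parity_familyD[OF S]) auto
    then show ?thesis using count(1)[OF \<open>\<mu> \<notin> T\<close>] by simp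
  qed
  show "card S = card A + card B" using count(2)[of "{}"] by simp
  show "parity_family \<mu> r B" using sub(2) even_B unfolding parity_family_def by simp
  show "parity_family \<mu> r A"
    unfolding parity_family_def
  proof (intro conjI allI impI)
    fix T assume "T \<subseteq> {..<\<mu>}" "card T < r"
    then show "even (card {P \<in> A. T \<subseteq> P})" using even_AB[of T] even_B[of T] by simp
  qed (use sub in auto)
  show "parity_family \<mu> (Suc r) (sym_diff A B)"
    unfolding parity_family_def
  proof (intro conjI allI impI)
    fix T assume T: "T \<subseteq> {..<\<mu>}" "card T < Suc r"
    have "{P \<in> sym_diff A B. T \<subseteq> P} = sym_diff {P \<in> A. T \<subseteq> P} {P \<in> B. T \<subseteq> P}" by auto
    then show "even (card {P \<in> sym_diff A B. T \<subseteq> P})"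
      using even_AB[OF T] odd_card_sym_diff[of "{P \<in> A. T \<subseteq> P}" "{P \<in> B. T \<subseteq> P}"]
        \<open>finite A\<close> \<open>finite B\<close> by simp
  qed (use sub in auto)
qed

lemma card_parity_family_ge: "parity_family \<mu> r S \<Longrightarrow> S \<noteq> {} \<Longrightarrow> 2 ^ r \<le> card S"
proof (induction \<mu> arbitrary: S r)
  case 0
  have "S \<subseteq> Pow {..<0}" using "0.prems"(1) by (rule parity_family_subset)
  then have S: "S = {{}}" using "0.prems"(2) by (simp add: subset_singleton_iff)
  show ?case
  proof (cases r)
    case (Suc r')
    then have "even (card {P \<in> S. {} \<subseteq> P})" using "0.prems"(1) by (intro parity_familyD) auto
    then show ?thesis using S by simp
  qed (simp add: S)
next
  case (Suc \<mu>)
  have "card S \<noteq> 0" using Suc.prems finite_parity_family by auto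
  show ?case
  proof (cases r)
    case 0
    then show ?thesis using \<open>card S \<noteq> 0\<close> by simp
  next
    case (Suc r')
    define A where "A = {P \<in> S. \<mu> \<notin> P}"
    define B where "B = (\<lambda>P. P - {\<mu>}) ` {P \<in> S. \<mu> \<in> P}"
    have card_S: "card S = card A + card B" and fam_A: "parity_family \<mu> r' A"
      and fam_B: "parity_family \<mu> r' B" and fam_AB: "parity_family \<mu> r (sym_diff A B)"
      using parity_family_split[of \<mu> r' S] Suc.prems(1) unfolding Suc A_def B_def by simp_all
    show ?thesis
    proof (cases "A = B")
      case True
      then have "A \<noteq> {}" using card_S \<open>card S \<noteq> 0\<close> by auto
      then have "2 ^ r' \<le> card A" using Suc.IH fam_A by blast
      then show ?thesis using card_S True Suc by simp
    next
      case False
      have "finite A" "finite B" using fam_A fam_B by (simp_all add: finite_parity_family)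
      from False have "2 ^ r \<le> card (sym_diff A B)" using Suc.IH fam_AB by blast
      also have "\<dots> \<le> card (A \<union> B)"
        using \<open>finite A\<close> \<open>finite B\<close> by (intro card_mono) auto
      also have "\<dots> \<le> card A + card B" by (rule card_Un_le)
      finally show ?thesis using card_S by simp
    qed
  qed
qed

section \<open>Convolutional Reed--Muller generators\<close>

text \<open>Qubit j is position j mod 2^\<mu> of block j div 2^\<mu>, and position p stands for the point
  set_decode p of F_2^\<mu>. So on every block in K this is the evaluation vector of the monomial
  x_T = \<Prod>i\<in>T. x_i.\<close>
definition block_monomial :: "nat \<Rightarrow> nat set \<Rightarrow> nat set \<Rightarrow> bvec" where
  "block_monomial \<mu> K T = (\<lambda>j. j div 2 ^ \<mu> \<in> K \<and> T \<subseteq> set_decode (j mod 2 ^ \<mu>))"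

lemma card_div_mod_Collect:
  fixes n :: nat
  assumes "0 < n"
  shows "card {j. j div n \<in> K \<and> P (j mod n)} = card K * card {p. p < n \<and> P p}"
proof -
  have "bij_betw (\<lambda>j. (j div n, j mod n)) {j. j div n \<in> K \<and> P (j mod n)} (K \<times> {p. p < n \<and> P p})"
    by (rule bij_betw_byWitness[where f' = "\<lambda>(t, p). t * n + p"]) (use assms in auto)
  then show ?thesis by (simp add: bij_betw_same_card card_cartesian_product)
qed

lemma card_block_monomial:
  "T \<subseteq> {..<\<mu>} \<Longrightarrow> card (Collect (block_monomial \<mu> K T)) = card K * 2 ^ (\<mu> - card T)"
  unfolding block_monomial_def
  by (simp add: card_div_mod_Collect[of "2 ^ \<mu>" K "\<lambda>p. T \<subseteq> set_decode p"] card_supersets_decode)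

lemma block_monomial_conj:
  "block_monomial \<mu> K T j \<and> block_monomial \<mu> K' T' j \<longleftrightarrow> block_monomial \<mu> (K \<inter> K') (T \<union> T') j"
  unfolding block_monomial_def by auto

lemma dot_block_monomial:
  "T \<union> T' \<subseteq> {..<\<mu>} \<Longrightarrow> dot (block_monomial \<mu> K T) (block_monomial \<mu> K' T') \<longleftrightarrow>
     odd (card (K \<inter> K') * 2 ^ (\<mu> - card (T \<union> T')))"
  unfolding dot_def block_monomial_conj by (simp add: card_block_monomial)

lemma finite_block_monomial:
  assumes "finite K"
  shows "finite (Collect (block_monomial \<mu> K T))"
proof (rule finite_subset)
  show "Collect (block_monomial \<mu> K T) \<subseteq> (\<lambda>(t, p). t * 2 ^ \<mu> + p) ` (K \<times> {..<2 ^ \<mu>})"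
    unfolding block_monomial_def
    by (auto intro!: image_eqI[where x = "(j div 2 ^ \<mu>, j mod 2 ^ \<mu>)" for j] simp: div_mult_mod_eq)
qed (use assms in simp)

definition rm_monomials :: "nat \<Rightarrow> nat \<Rightarrow> nat set set" where
  "rm_monomials \<mu> r = {T. T \<subseteq> {..<\<mu>} \<and> card T \<le> r}"

text \<open>The generator D^t (1 + D) x_T of the convolutional code, indexed by (t, T).\<close>
definition conv_gen :: "nat \<Rightarrow> nat \<times> nat set \<Rightarrow> bvec" where
  "conv_gen \<mu> i = block_monomial \<mu> {fst i, Suc (fst i)} (snd i)"

abbreviation conv_code :: "nat \<Rightarrow> nat \<Rightarrow> bvec set" where
  "conv_code \<mu> r \<equiv> vec_span (conv_gen \<mu>) (UNIV \<times> rm_monomials \<mu> r)"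

lemma finite_conv_gen: "finite (Collect (conv_gen \<mu> i))"
  unfolding conv_gen_def by (simp add: finite_block_monomial)

lemma finite_rm_monomials: "finite (rm_monomials \<mu> r)"
  unfolding rm_monomials_def by (rule finite_subset[of _ "Pow {..<\<mu>}"]) auto

lemma card_rm_monomials: "card (rm_monomials \<mu> r) = (\<Sum>i = 0..r. \<mu> choose i)"
proof -
  have "rm_monomials \<mu> r = (\<Union>i \<in> {0..r}. {T. T \<subseteq> {..<\<mu>} \<and> card T = i})"
    unfolding rm_monomials_def by auto
  also have "card \<dots> = (\<Sum>i = 0..r. card {T. T \<subseteq> {..<\<mu>} \<and> card T = i})"
    by (rule card_UN_disjoint) (auto intro: finite_subset[of _ "Pow {..<\<mu>}"])
  finally show ?thesis by (simp add: n_subsets)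
qed

text \<open>Complementation maps the monomials of degree at most r injectively to monomials of degree
  greater than r, since 2r < \<mu>.\<close>
lemma card_rm_monomials_le:
  assumes "2 * r < \<mu>"
  shows "2 * card (rm_monomials \<mu> r) \<le> 2 ^ \<mu>"
proof -
  let ?M = "rm_monomials \<mu> r" and ?c = "\<lambda>T. {..<\<mu>} - T"
  have inj: "inj_on ?c ?M"
    by (rule inj_onI) (auto simp: rm_monomials_def subset_eq Diff_eq set_eq_iff)
  have "?c T \<notin> ?M" if "T \<in> ?M" for T
  proof -
    have "card (?c T) = \<mu> - card T"
      using that finite_subset[of T "{..<\<mu>}"] by (simp add: rm_monomials_def card_Diff_subset)
    moreover have "card T \<le> r" using that by (simp add: rm_monomials_def)
    ultimately show ?thesis using assms by (simp add: rm_monomials_def)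
  qed
  then have disj: "?M \<inter> ?c ` ?M = {}" by blast
  have "2 * card ?M = card (?M \<union> ?c ` ?M)"
    using disj finite_rm_monomials by (simp add: card_Un_disjoint card_image[OF inj])
  also have "\<dots> \<le> card (Pow {..<\<mu>})"
    by (rule card_mono) (auto simp: rm_monomials_def)
  finally show ?thesis by (simp add: card_Pow)
qed

lemma dot_conv_gen:
  assumes "snd i \<in> rm_monomials \<mu> r" "snd i' \<in> rm_monomials \<mu> r" "2 * r < \<mu>"
  shows "\<not> dot (conv_gen \<mu> i) (conv_gen \<mu> i')"
proof -
  have "card (snd i \<union> snd i') \<le> card (snd i) + card (snd i')" by (rule card_Un_le)
  then have "card (snd i \<union> snd i') < \<mu>" using assms unfolding rm_monomials_def by simp
  then show ?thesis using assms(1,2)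
    unfolding conv_gen_def rm_monomials_def by (simp add: dot_block_monomial)
qed

lemma dot_conv_span:
  assumes "u \<in> conv_code \<mu> r" "v \<in> conv_code \<mu> r" "2 * r < \<mu>"
  shows "\<not> dot u v"
proof (rule dot_vec_span_left[OF assms(1) finite_conv_gen])
  fix i :: "nat \<times> nat set" assume i: "i \<in> UNIV \<times> rm_monomials \<mu> r"
  have "\<not> dot v (conv_gen \<mu> i)"
    by (rule dot_vec_span_left[OF assms(2) finite_conv_gen]) (use i assms(3) dot_conv_gen in auto)
  then show "\<not> dot (conv_gen \<mu> i) v" by (simp add: dot_commute)
qed

lemma self_orthogonal_conv_span:
  assumes "2 * r < \<mu>" "C \<subseteq> UNIV \<times> rm_monomials \<mu> r"
  shows "self_orthogonal (vec_span (conv_gen \<mu>) C)"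
  unfolding self_orthogonal_def
  using dot_conv_span[OF _ _ assms(1)] vec_span_mono[OF assms(2)] by blast

lemma self_orthogonal_conv_code: "2 * r < \<mu> \<Longrightarrow> self_orthogonal (conv_code \<mu> r)"
  using self_orthogonal_conv_span[OF _ subset_refl] .

lemma css_conv_span_subset_conv_code:
  "C \<subseteq> UNIV \<times> rm_monomials \<mu> r \<Longrightarrow> css (vec_span (conv_gen \<mu>) C) \<subseteq> css (conv_code \<mu> r)"
  by (intro css_mono vec_span_mono)

lemma css_conv_span_subset_paulis_below:
  assumes "C \<subseteq> {..s} \<times> UNIV" "(s + 2) * 2 ^ \<mu> \<le> N"
  shows "css (vec_span (conv_gen \<mu>) C) \<subseteq> paulis_below N"
proof -
  have "\<not> conv_gen \<mu> i j" if "i \<in> C" "N \<le> j" for i j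
  proof -
    have "(s + 2) * 2 ^ \<mu> div 2 ^ \<mu> \<le> j div 2 ^ \<mu>" using assms(2) that(2) by (intro div_le_mono) simp
    then show ?thesis using assms(1) that(1) unfolding conv_gen_def block_monomial_def by auto
  qed
  then show ?thesis
    unfolding css_def paulis_below_def using vec_span_vanishes by blast
qed

lemma shift_vec_conv_gen: "shift_vec (t * 2 ^ \<mu>) (conv_gen \<mu> i) = conv_gen \<mu> (fst i + t, snd i)"
proof
  fix j
  show "shift_vec (t * 2 ^ \<mu>) (conv_gen \<mu> i) j = conv_gen \<mu> (fst i + t, snd i) j"
  proof (cases "t * 2 ^ \<mu> \<le> j")
    case True
    then obtain q where "j = t * 2 ^ \<mu> + q" using le_Suc_ex by blast
    then show ?thesis unfolding shift_vec_def conv_gen_def block_monomial_def by auto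
  next
    case False
    then have "j div 2 ^ \<mu> < t" by (simp add: div_less_iff_less_mult)
    then show ?thesis using False unfolding shift_vec_def conv_gen_def block_monomial_def by auto
  qed
qed

lemma shift_vec_in_conv_span:
  assumes "u \<in> vec_span (conv_gen \<mu>) ({0} \<times> M)"
  shows "shift_vec (t * 2 ^ \<mu>) u \<in> vec_span (conv_gen \<mu>) ({t} \<times> M)"
proof -
  obtain D where D: "u = vec_sum (conv_gen \<mu>) D" "D \<subseteq> {0} \<times> M" "finite D"
    using assms unfolding vec_span_def by blast
  let ?h = "\<lambda>i :: nat \<times> nat set. (fst i + t, snd i)"
  have "inj_on ?h D" by (auto simp: inj_on_def prod_eq_iff)
  then have "shift_vec (t * 2 ^ \<mu>) u = vec_sum (conv_gen \<mu>) (?h ` D)"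
    unfolding D(1) shift_vec_vec_sum by (simp add: vec_sum_reindex comp_def shift_vec_conv_gen)
  moreover have "?h ` D \<subseteq> {t} \<times> M" using D(2) by auto
  ultimately show ?thesis unfolding vec_span_def using D(3) by blast
qed

text \<open>The position of a minimal T in the last block reached by J is covered by a single generator.\<close>
lemma conv_gen_independent:
  assumes "finite J" "J \<subseteq> UNIV \<times> Pow {..<\<mu>}" "vec_sum (conv_gen \<mu>) J = zero_vec"
  shows "J = {}"
proof (rule ccontr)
  assume "J \<noteq> {}"
  define s where "s = Max (fst ` J)"
  have s_max: "s' \<le> s" if "(s', T) \<in> J" for s' T
    unfolding s_def using assms(1) that by (intro Max_ge) force+
  have "s \<in> fst ` J" unfolding s_def using assms(1) \<open>J \<noteq> {}\<close> by (intro Max_in) auto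
  then have "{T. (s, T) \<in> J} \<noteq> {}" by force
  moreover have "finite {T. (s, T) \<in> J}"
    by (rule finite_subset[of _ "snd ` J"]) (force, simp add: assms(1))
  ultimately obtain T0 where T0: "(s, T0) \<in> J" and minimal: "\<And>T. (s, T) \<in> J \<Longrightarrow> T \<subseteq> T0 \<Longrightarrow> T = T0"
    using finite_has_minimal[of "{T. (s, T) \<in> J}"] by auto
  have "finite T0" "T0 \<subseteq> {..<\<mu>}" using T0 assms(2) by (auto intro: finite_subset)
  then have p: "set_encode T0 < 2 ^ \<mu>" "set_decode (set_encode T0) = T0"
    using set_decode_subset_lessThan_iff[of "set_encode T0" \<mu>] by simp_all
  define j where "j = Suc s * 2 ^ \<mu> + set_encode T0"
  have j: "j div 2 ^ \<mu> = Suc s" "set_decode (j mod 2 ^ \<mu>) = T0"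
    using p unfolding j_def by (simp_all del: mult_Suc)
  have "{i \<in> J. conv_gen \<mu> i j} = {(s, T0)}"
  proof (intro equalityI subsetI)
    fix i assume i: "i \<in> {i \<in> J. conv_gen \<mu> i j}"
    then obtain s' T where i_eq: "i = (s', T)" "(s', T) \<in> J" by (metis (lifting) mem_Collect_eq prod.exhaust)
    then have "s' = s" "T \<subseteq> T0"
      using i j s_max[of s' T] unfolding conv_gen_def block_monomial_def by auto
    then show "i \<in> {(s, T0)}" using minimal i_eq by auto
  qed (use T0 j in \<open>auto simp: conv_gen_def block_monomial_def\<close>)
  then have "vec_sum (conv_gen \<mu>) J j" unfolding vec_sum_def by simp
  then show False using assms(3) by simp
qed

definition block_count :: "nat \<Rightarrow> bvec \<Rightarrow> nat \<Rightarrow> nat set \<Rightarrow> nat" where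
  "block_count \<mu> z t T = card {p. p < 2 ^ \<mu> \<and> z (t * 2 ^ \<mu> + p) \<and> T \<subseteq> set_decode p}"

lemma card_div_eq_Collect:
  fixes n :: nat
  assumes "0 < n"
  shows "card {j. j div n = t \<and> Q j} = card {p. p < n \<and> Q (t * n + p)}"
proof -
  have "bij_betw (\<lambda>j. j mod n) {j. j div n = t \<and> Q j} {p. p < n \<and> Q (t * n + p)}"
    by (rule bij_betw_byWitness[where f' = "\<lambda>p. t * n + p"])
       (use assms in \<open>auto simp: div_mult_mod_eq mult.commute\<close>)
  then show ?thesis by (rule bij_betw_same_card)
qed

lemma dot_conv_gen_block_count:
  assumes "finite (Collect z)"
  shows "dot z (conv_gen \<mu> (t, T)) \<longleftrightarrow> odd (block_count \<mu> z t T + block_count \<mu> z (Suc t) T)"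
proof -
  let ?Q = "\<lambda>j. z j \<and> T \<subseteq> set_decode (j mod 2 ^ \<mu>)"
  let ?B = "\<lambda>t. {j. j div 2 ^ \<mu> = t \<and> ?Q j}"
  have "{j. z j \<and> conv_gen \<mu> (t, T) j} = ?B t \<union> ?B (Suc t)"
    unfolding conv_gen_def block_monomial_def by auto
  moreover have "finite (?B t)" "finite (?B (Suc t))"
    using assms by (auto intro: finite_subset)
  moreover have "card (?B t') = block_count \<mu> z t' T" for t'
    unfolding block_count_def by (simp add: card_div_eq_Collect cong: conj_cong)
  ultimately show ?thesis
    unfolding dot_def by (simp add: card_Un_disjoint disjoint_iff)
qed

text \<open>Orthogonality to the generator (1 + D) x_T makes the parities of consecutive block counts
  equal, and the counts vanish beyond the support of z.\<close>
lemma even_block_count: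
  assumes "finite (Collect z)" and orth: "\<And>t. \<not> dot z (conv_gen \<mu> (t, T))"
  shows "even (block_count \<mu> z t T)"
proof -
  obtain M where M: "\<And>j. z j \<Longrightarrow> j < M"
    using finite_nat_bounded[OF assms(1)] by auto
  have "block_count \<mu> z t' T = 0" if "M \<le> t'" for t'
  proof -
    have "t' \<le> t' * 2 ^ \<mu> + p" for p
      using mult_le_mono2[of 1 "2 ^ \<mu>" t'] by (simp add: trans_le_add1)
    then have "\<not> z (t' * 2 ^ \<mu> + p)" for p
      using M[of "t' * 2 ^ \<mu> + p"] that by (meson le_trans not_less)
    then show ?thesis unfolding block_count_def by simp
  qed
  have "t \<le> max t M" by simp
  then show ?thesis
  proof (induction t rule: inc_induct)
    case base
    show ?case using \<open>\<And>t'. M \<le> t' \<Longrightarrow> block_count \<mu> z t' T = 0\<close> by simp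
  next
    case (step n)
    then show ?case using orth[of n] dot_conv_gen_block_count[OF assms(1)] by auto
  qed
qed

lemma card_support_ge_of_orthogonal:
  assumes fin: "finite (Collect z)" and "z j0"
    and orth: "\<And>t T. T \<in> rm_monomials \<mu> r \<Longrightarrow> \<not> dot z (conv_gen \<mu> (t, T))"
  shows "2 ^ Suc r \<le> card (Collect z)"
proof -
  define t0 where "t0 = j0 div 2 ^ \<mu>"
  define D where "D = {p. p < 2 ^ \<mu> \<and> z (t0 * 2 ^ \<mu> + p)}"
  have inj: "inj_on set_decode A" for A by (metis inj_onI set_decode_inverse)
  have "parity_family \<mu> (Suc r) (set_decode ` D)"
    unfolding parity_family_def
  proof (intro conjI allI impI)
    show "set_decode ` D \<subseteq> Pow {..<\<mu>}"
      by (rule image_subsetI) (simp add: D_def set_decode_subset_lessThan_iff)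
    fix T assume T: "T \<subseteq> {..<\<mu>}" "card T < Suc r"
    have "{P \<in> set_decode ` D. T \<subseteq> P} = set_decode ` {p \<in> D. T \<subseteq> set_decode p}" by auto
    then have "card {P \<in> set_decode ` D. T \<subseteq> P} = block_count \<mu> z t0 T"
      unfolding block_count_def D_def by (simp add: card_image[OF inj] conj_assoc)
    then show "even (card {P \<in> set_decode ` D. T \<subseteq> P})"
      using even_block_count[OF fin orth] T by (simp add: rm_monomials_def)
  qed
  moreover have "j0 mod 2 ^ \<mu> \<in> D"
    using \<open>z j0\<close> unfolding D_def t0_def by (simp add: div_mult_mod_eq)
  ultimately have "2 ^ Suc r \<le> card (set_decode ` D)"
    by (intro card_parity_family_ge) auto
  also have "\<dots> = card ((\<lambda>p. t0 * 2 ^ \<mu> + p) ` D)"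
    by (simp add: card_image[OF inj] card_image inj_on_def)
  also have "\<dots> \<le> card (Collect z)"
    by (rule card_mono[OF fin]) (auto simp: D_def)
  finally show ?thesis .
qed

text \<open>The monomial x_0 \<cdots> x_(\<mu>-r-2) on block 0, a minimum-weight word of RM(\<mu>-r-1, \<mu>), the dual
  of RM(r, \<mu>).\<close>
definition min_word :: "nat \<Rightarrow> nat \<Rightarrow> bvec" where
  "min_word \<mu> r = block_monomial \<mu> {0} {..<\<mu> - Suc r}"

lemma finite_min_word: "finite (Collect (min_word \<mu> r))"
  unfolding min_word_def by (simp add: finite_block_monomial)

lemma card_min_word: "Suc r \<le> \<mu> \<Longrightarrow> card (Collect (min_word \<mu> r)) = 2 ^ Suc r"
  unfolding min_word_def by (simp add: card_block_monomial)

lemma dot_min_word_conv_gen: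
  assumes "snd i \<in> rm_monomials \<mu> r" "2 * r < \<mu>"
  shows "\<not> dot (min_word \<mu> r) (conv_gen \<mu> i)"
proof -
  have "card ({..<\<mu> - Suc r} \<union> snd i) \<le> card {..<\<mu> - Suc r} + card (snd i)" by (rule card_Un_le)
  then have "card ({..<\<mu> - Suc r} \<union> snd i) < \<mu>" using assms unfolding rm_monomials_def by (simp; arith)
  then show ?thesis using assms(1)
    unfolding min_word_def conv_gen_def rm_monomials_def by (simp add: dot_block_monomial)
qed

text \<open>Every generator meets the last positions of the blocks in exactly two qubits, the
  minimum-weight word in one.\<close>
lemma min_word_notin_conv_span: "min_word \<mu> r \<notin> vec_span (conv_gen \<mu>) (UNIV \<times> Pow {..<\<mu>})"
proof
  let ?top = "block_monomial \<mu> UNIV {..<\<mu>}"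
  assume "min_word \<mu> r \<in> vec_span (conv_gen \<mu>) (UNIV \<times> Pow {..<\<mu>})"
  moreover have "\<not> dot (conv_gen \<mu> i) ?top" if "i \<in> UNIV \<times> Pow {..<\<mu>}" for i
  proof -
    have "snd i \<union> {..<\<mu>} = {..<\<mu>}" using that by auto
    then show ?thesis unfolding conv_gen_def by (simp add: dot_block_monomial)
  qed
  ultimately have "\<not> dot (min_word \<mu> r) ?top"
    by (rule dot_vec_span_left[OF _ finite_conv_gen])
  moreover have "{..<\<mu> - Suc r} \<union> {..<\<mu>} = {..<\<mu>}" by auto
  ultimately show False unfolding min_word_def by (simp add: dot_block_monomial)
qed

section \<open>The stabilizer\<close>

definition rm_stabilizer :: "nat \<Rightarrow> nat \<Rightarrow> pauli set" where
  "rm_stabilizer \<mu> r = css (vec_span (conv_gen \<mu>) ({0} \<times> rm_monomials \<mu> r))"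

lemma pshift_rm_stabilizer:
  "M \<in> rm_stabilizer \<mu> r \<Longrightarrow> pshift (t * 2 ^ \<mu>) M \<in> css (vec_span (conv_gen \<mu>) ({t} \<times> rm_monomials \<mu> r))"
  unfolding rm_stabilizer_def css_def by (auto simp: pshift_eq shift_vec_in_conv_span)

lemma generators_in_pshift_rm_stabilizer:
  assumes "T \<in> rm_monomials \<mu> r"
  shows "pauli_X (conv_gen \<mu> (t, T)) \<in> pshift (t * 2 ^ \<mu>) ` rm_stabilizer \<mu> r"
    and "pauli_Z (conv_gen \<mu> (t, T)) \<in> pshift (t * 2 ^ \<mu>) ` rm_stabilizer \<mu> r"
proof -
  have "conv_gen \<mu> (0, T) \<in> vec_span (conv_gen \<mu>) ({0} \<times> rm_monomials \<mu> r)"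
    using assms by (intro in_vec_span) simp
  then have "pauli_X (conv_gen \<mu> (0, T)) \<in> rm_stabilizer \<mu> r"
    and "pauli_Z (conv_gen \<mu> (0, T)) \<in> rm_stabilizer \<mu> r"
    unfolding rm_stabilizer_def using pauli_X_Z_in_css by blast+
  moreover have "pauli_X (conv_gen \<mu> (t, T)) = pshift (t * 2 ^ \<mu>) (pauli_X (conv_gen \<mu> (0, T)))"
    and "pauli_Z (conv_gen \<mu> (t, T)) = pshift (t * 2 ^ \<mu>) (pauli_Z (conv_gen \<mu> (0, T)))"
    using shift_vec_conv_gen[of t \<mu> "(0, T)"]
    by (simp_all add: pauli_X_def pauli_Z_def pshift_eq shift_vec_def)
  ultimately show "pauli_X (conv_gen \<mu> (t, T)) \<in> pshift (t * 2 ^ \<mu>) ` rm_stabilizer \<mu> r"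
    and "pauli_Z (conv_gen \<mu> (t, T)) \<in> pshift (t * 2 ^ \<mu>) ` rm_stabilizer \<mu> r" by simp_all
qed

lemma St_rm_stabilizer:
  assumes "2 * r < \<mu>"
  shows "St (2 ^ \<mu>) (2 ^ \<mu>) (rm_stabilizer \<mu> r) t = css (vec_span (conv_gen \<mu>) ({..t} \<times> rm_monomials \<mu> r))"
proof (induction t)
  case 0
  then show ?case unfolding rm_stabilizer_def by (simp add: atMost_0)
next
  case (Suc t)
  let ?C = "{..Suc t} \<times> rm_monomials \<mu> r"
  let ?Y = "St (2 ^ \<mu>) (2 ^ \<mu>) (rm_stabilizer \<mu> r) t \<union> pshift (Suc t * 2 ^ \<mu>) ` rm_stabilizer \<mu> r"
  have "generate (Pt (2 ^ \<mu>) (2 ^ \<mu>) (Suc t)) ?Y = css (vec_span (conv_gen \<mu>) ?C)"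
    unfolding Pt_eq
  proof (rule generate_css[OF pauli_closed_paulis_below])
    show "css (vec_span (conv_gen \<mu>) ?C) \<subseteq> paulis_below ((Suc t + 1) * 2 ^ \<mu> + 2 ^ \<mu>)"
      by (rule css_conv_span_subset_paulis_below[of _ "Suc t"]) auto
    show "self_orthogonal (vec_span (conv_gen \<mu>) ?C)"
      using assms by (rule self_orthogonal_conv_span) auto
    show "pauli_X (conv_gen \<mu> i) \<in> ?Y \<and> pauli_Z (conv_gen \<mu> i) \<in> ?Y" if "i \<in> ?C" for i
    proof (cases "fst i \<le> t")
      case True
      then have "conv_gen \<mu> i \<in> vec_span (conv_gen \<mu>) ({..t} \<times> rm_monomials \<mu> r)"
        using that by (intro in_vec_span) auto
      then show ?thesis using Suc.IH pauli_X_Z_in_css by auto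
    next
      case False
      then have "i = (Suc t, snd i)" "snd i \<in> rm_monomials \<mu> r" using that by auto
      then show ?thesis using generators_in_pshift_rm_stabilizer[of "snd i" \<mu> r "Suc t"] by auto
    qed
    have "vec_span (conv_gen \<mu>) ({..t} \<times> rm_monomials \<mu> r) \<subseteq> vec_span (conv_gen \<mu>) ?C"
      "vec_span (conv_gen \<mu>) ({Suc t} \<times> rm_monomials \<mu> r) \<subseteq> vec_span (conv_gen \<mu>) ?C"
      by (auto intro!: vec_span_mono)
    then show "?Y \<subseteq> css (vec_span (conv_gen \<mu>) ?C)"
      using Suc.IH pshift_rm_stabilizer css_mono by blast
  qed
  then show ?case by simp
qed

lemma Sinf_rm_stabilizer:
  assumes "2 * r < \<mu>"
  shows "Sinf (2 ^ \<mu>) (rm_stabilizer \<mu> r) = css (conv_code \<mu> r)"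
proof -
  let ?C = "(UNIV :: nat set) \<times> rm_monomials \<mu> r"
  let ?Y = "{pshift (t * 2 ^ \<mu>) M | t M. M \<in> rm_stabilizer \<mu> r}"
  have "generate (pauli_on paulis_finite) ?Y = css (vec_span (conv_gen \<mu>) ?C)"
  proof (rule generate_css[OF pauli_closed_paulis_finite])
    show "css (vec_span (conv_gen \<mu>) ?C) \<subseteq> paulis_finite"
      by (rule css_subset_paulis_finite) (rule finite_conv_gen)
    show "self_orthogonal (vec_span (conv_gen \<mu>) ?C)"
      using assms by (rule self_orthogonal_conv_code)
    show "pauli_X (conv_gen \<mu> i) \<in> ?Y \<and> pauli_Z (conv_gen \<mu> i) \<in> ?Y" if i: "i \<in> ?C" for i
    proof -
      obtain s T where "i = (s, T)" "T \<in> rm_monomials \<mu> r" using i by auto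
      then show ?thesis using generators_in_pshift_rm_stabilizer[of T \<mu> r s] by blast
    qed
    have "vec_span (conv_gen \<mu>) ({t} \<times> rm_monomials \<mu> r) \<subseteq> vec_span (conv_gen \<mu>) ?C" for t
      by (auto intro!: vec_span_mono)
    then show "?Y \<subseteq> css (vec_span (conv_gen \<mu>) ?C)"
      using pshift_rm_stabilizer css_mono by blast
  qed
  then show ?thesis unfolding Sinf_def pauli_inf_eq .
qed

lemma conv_stab_code_rm_stabilizer:
  assumes r: "2 * r < \<mu>"
  shows "conv_stab_code (2 ^ \<mu>) (2 ^ \<mu> - 2 * (\<Sum>i = 0..r. \<mu> choose i)) (2 ^ \<mu>) (rm_stabilizer \<mu> r)"
  unfolding conv_stab_code_def
proof (intro conjI allI impI ballI)
  let ?n = "2 ^ \<mu> :: nat" and ?k = "2 ^ \<mu> - 2 * (\<Sum>i = 0..r. \<mu> choose i)"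
  have orth: "self_orthogonal (conv_code \<mu> r)" using r by (rule self_orthogonal_conv_code)
  have S0: "rm_stabilizer \<mu> r \<subseteq> css (conv_code \<mu> r)"
    unfolding rm_stabilizer_def by (rule css_conv_span_subset_conv_code) auto
  show "0 < ?n" "0 < ?n" "?k \<le> ?n" by simp_all
  show "subgroup (rm_stabilizer \<mu> r) (Pt ?n ?n 0)"
    unfolding Pt_eq rm_stabilizer_def
    by (rule subgroup_css[OF pauli_closed_paulis_below css_conv_span_subset_paulis_below[of _ 0]
          self_orthogonal_conv_span[OF r]]) auto
  show "pmult x y = pmult y x" if "x \<in> rm_stabilizer \<mu> r" "y \<in> rm_stabilizer \<mu> r" for x y
    using css_commute[OF orth] S0 that by blast
  show "pmult (pshift (t * ?n) M) N = pmult N (pshift (t * ?n) M)"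
    if "M \<in> rm_stabilizer \<mu> r" "N \<in> rm_stabilizer \<mu> r" for t M N
    using css_commute[OF orth] S0 that pshift_rm_stabilizer css_conv_span_subset_conv_code[of "{t} \<times> _"]
    by blast
next
  fix t :: nat
  let ?n = "2 ^ \<mu> :: nat" and ?C = "{..t} \<times> rm_monomials \<mu> r"
  let ?H = "(Pt ?n ?n t)\<lparr>carrier := set_mult (Pt ?n ?n t) (St ?n ?n (rm_stabilizer \<mu> r) t) (gcenter (Pt ?n ?n t))\<rparr>"
  have St: "St ?n ?n (rm_stabilizer \<mu> r) t = css (vec_span (conv_gen \<mu>) ?C)"
    by (rule St_rm_stabilizer[OF r])
  interpret css_quotient ?H "conv_gen \<mu>" ?C
  proof
    show "carrier ?H = css_signed (vec_span (conv_gen \<mu>) ?C)"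
      unfolding St gcenter_Pt by (simp add: set_mult_css_scalars Pt_eq)
    show "finite ?C" by (simp add: finite_rm_monomials)
    show "J = {}" if "J \<subseteq> ?C" "vec_sum (conv_gen \<mu>) J = zero_vec" for J
      using that finite_subset[OF that(1)] by (intro conv_gen_independent) (auto simp: rm_monomials_def)
  qed (simp add: Pt_eq)
  have "2 * card ?C = (t + 1) * (?n - (?n - 2 * (\<Sum>i = 0..r. \<mu> choose i)))"
    using card_rm_monomials_le[OF r] by (simp add: card_cartesian_product card_rm_monomials)
  then show "f2_dim_eq (?H Mod gcenter (Pt ?n ?n t)) ((t + 1) * (?n - (?n - 2 * (\<Sum>i = 0..r. \<mu> choose i))))"
    using f2_dim_G by (simp add: gcenter_Pt)
  show "St ?n ?n (rm_stabilizer \<mu> r) t \<inter> gcenter (Pt ?n ?n t) = {pone}"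
    unfolding St gcenter_Pt using zero_in_vec_span by (auto simp: css_def scalars_def pone_eq)
qed

lemma pauli_X_Z_conv_gen_in_Sinf:
  assumes "2 * r < \<mu>" "T \<in> rm_monomials \<mu> r"
  shows "pauli_X (conv_gen \<mu> (t, T)) \<in> Sinf (2 ^ \<mu>) (rm_stabilizer \<mu> r)"
    and "pauli_Z (conv_gen \<mu> (t, T)) \<in> Sinf (2 ^ \<mu>) (rm_stabilizer \<mu> r)"
  using pauli_X_Z_in_css[OF in_vec_span[of "(t, T)"]] assms
  by (simp_all add: Sinf_rm_stabilizer)

lemma pweight_ge_if_commutes:
  assumes r: "2 * r < \<mu>" and x: "x \<in> gcentralizer pauli_inf (Sinf (2 ^ \<mu>) (rm_stabilizer \<mu> r))"
    and "x \<notin> scalars"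
  shows "2 ^ Suc r \<le> pweight x"
proof -
  obtain s a b where x_eq: "x = (s, a, b)" by (cases x)
  have fin: "finite (Collect a)" "finite (Collect b)"
    using x unfolding x_eq gcentralizer_def pauli_inf_eq by (simp_all add: mem_paulis_finite)
  have comm: "pmult (s, a, b) y = pmult y (s, a, b)" if "y \<in> Sinf (2 ^ \<mu>) (rm_stabilizer \<mu> r)" for y
    using x that unfolding x_eq gcentralizer_def by (simp add: mult_pauli_inf)
  have orth: "\<not> dot a (conv_gen \<mu> (t, T))" "\<not> dot b (conv_gen \<mu> (t, T))"
    if "T \<in> rm_monomials \<mu> r" for t T
    using comm[OF pauli_X_Z_conv_gen_in_Sinf(1)[OF r that]] comm[OF pauli_X_Z_conv_gen_in_Sinf(2)[OF r that]]
      commute_pauli_X_iff commute_pauli_Z_iff by blast+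
  have "\<exists>z. (z = a \<or> z = b) \<and> (\<exists>j. z j)"
    using \<open>x \<notin> scalars\<close> unfolding x_eq scalars_def by auto
  then obtain z j0 where "z = a \<or> z = b" "z j0" by blast
  moreover have "finite (Collect z)" "\<And>t T. T \<in> rm_monomials \<mu> r \<Longrightarrow> \<not> dot z (conv_gen \<mu> (t, T))"
    using fin orth \<open>z = a \<or> z = b\<close> by auto
  ultimately have "2 ^ Suc r \<le> card (Collect z)"
    using card_support_ge_of_orthogonal by blast
  also have "\<dots> \<le> card {j. a j \<or> b j}"
    using fin \<open>z = a \<or> z = b\<close> by (intro card_mono) auto
  finally show ?thesis unfolding x_eq pweight_def by simp
qed

lemma min_word_in_centralizer:
  assumes r: "2 * r < \<mu>"
  shows "pauli_X (min_word \<mu> r) \<in> gcentralizer pauli_inf (Sinf (2 ^ \<mu>) (rm_stabilizer \<mu> r))"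
  unfolding gcentralizer_def pauli_inf_eq Sinf_rm_stabilizer[OF r]
proof (intro CollectI conjI ballI)
  show "pauli_X (min_word \<mu> r) \<in> carrier (pauli_on paulis_finite)"
    by (simp add: pauli_X_def mem_paulis_finite finite_min_word)
  fix y assume "y \<in> css (conv_code \<mu> r)"
  then obtain a b where y: "y = (False, a, b)" "b \<in> conv_code \<mu> r" unfolding css_def by blast
  have "\<not> dot b (min_word \<mu> r)"
  proof (rule dot_vec_span_left[OF y(2) finite_conv_gen])
    fix i :: "nat \<times> nat set" assume "i \<in> UNIV \<times> rm_monomials \<mu> r"
    then show "\<not> dot (conv_gen \<mu> i) (min_word \<mu> r)"
      using dot_min_word_conv_gen[OF _ r] by (simp add: dot_commute mem_Times_iff)
  qed
  then have "pmult y (pauli_X (min_word \<mu> r)) = pmult (pauli_X (min_word \<mu> r)) y"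
    unfolding y using commute_pauli_X_iff by blast
  then show "pauli_X (min_word \<mu> r) \<otimes>\<^bsub>pauli_on paulis_finite\<^esub> y = y \<otimes>\<^bsub>pauli_on paulis_finite\<^esub> pauli_X (min_word \<mu> r)"
    by simp
qed

lemma min_word_notin_stabilizer:
  assumes r: "2 * r < \<mu>"
  shows "pauli_X (min_word \<mu> r) \<notin> set_mult pauli_inf (gcenter pauli_inf) (Sinf (2 ^ \<mu>) (rm_stabilizer \<mu> r))"
proof -
  have "conv_code \<mu> r \<subseteq> vec_span (conv_gen \<mu>) (UNIV \<times> Pow {..<\<mu>})"
    by (rule vec_span_mono) (auto simp: rm_monomials_def)
  then have "min_word \<mu> r \<notin> conv_code \<mu> r" using min_word_notin_conv_span by blast
  then show ?thesis
    unfolding Sinf_rm_stabilizer[OF r] gcenter_pauli_inf set_mult_css_scalars(2)[OF mult_pauli_inf]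
    by (simp add: css_signed_def pauli_X_def)
qed

lemma free_distance_rm_stabilizer:
  assumes r: "2 * r < \<mu>"
  shows "free_distance (2 ^ \<mu>) (rm_stabilizer \<mu> r) = 2 ^ Suc r"
  unfolding free_distance_def
proof (rule cInf_eq_minimum)
  let ?S = "Sinf (2 ^ \<mu>) (rm_stabilizer \<mu> r)"
  have "pweight (pauli_X (min_word \<mu> r)) = 2 ^ Suc r"
    using card_min_word r unfolding pweight_def pauli_X_def by simp
  then show "2 ^ Suc r \<in> pweight ` (gcentralizer pauli_inf ?S - set_mult pauli_inf (gcenter pauli_inf) ?S)"
    using min_word_in_centralizer[OF r] min_word_notin_stabilizer[OF r] by (metis DiffI imageI)
  have "scalars \<subseteq> set_mult pauli_inf (gcenter pauli_inf) ?S"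
    unfolding Sinf_rm_stabilizer[OF r] gcenter_pauli_inf set_mult_css_scalars(2)[OF mult_pauli_inf]
    using zero_in_vec_span by (auto simp: scalars_def css_signed_def)
  then show "2 ^ Suc r \<le> w"
    if "w \<in> pweight ` (gcentralizer pauli_inf ?S - set_mult pauli_inf (gcenter pauli_inf) ?S)" for w
    using that pweight_ge_if_commutes[OF r] by blast
qed

lemma pure_code_rm_stabilizer:
  assumes r: "2 * r < \<mu>"
  shows "pure_code (2 ^ \<mu>) (rm_stabilizer \<mu> r)"
  unfolding pure_code_def
proof (intro ballI impI)
  fix e assume e: "e \<in> Sinf (2 ^ \<mu>) (rm_stabilizer \<mu> r)" "e \<notin> gcenter pauli_inf"
  have "self_orthogonal (conv_code \<mu> r)" using r by (rule self_orthogonal_conv_code)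
  moreover have "css (conv_code \<mu> r) \<subseteq> paulis_finite"
    by (rule css_subset_paulis_finite) (rule finite_conv_gen)
  ultimately have "e \<in> gcentralizer pauli_inf (Sinf (2 ^ \<mu>) (rm_stabilizer \<mu> r))"
    using e(1) css_commute unfolding Sinf_rm_stabilizer[OF r] gcentralizer_def pauli_inf_eq by auto
  then show "free_distance (2 ^ \<mu>) (rm_stabilizer \<mu> r) \<le> pweight e"
    using pweight_ge_if_commutes[OF r] e(2) free_distance_rm_stabilizer[OF r]
    by (simp add: gcenter_pauli_inf)
qed

theorem mainTheorem13:
  fixes l m r :: nat
  assumes "1 \<le> l" and "l \<le> m"
    and "int r \<le> (int m - int l - 1) div 2"
  shows "\<exists>m' S0.
     m' \<le> 2 ^ (m - l) * (2 ^ l - 1) \<and>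
     conv_stab_code (2 ^ (m - l)) (2 ^ (m - l) - 2 * (\<Sum>i = 0..r. (m - l) choose i)) m' S0 \<and>
     free_distance (2 ^ (m - l)) S0 = 2 ^ (r + 1) \<and>
     pure_code (2 ^ (m - l)) S0"
proof (intro exI conjI)
  have "(2 :: nat) ^ 1 \<le> 2 ^ l" using assms(1) by (rule power_increasing) simp
  then show "(2 :: nat) ^ (m - l) \<le> 2 ^ (m - l) * (2 ^ l - 1)" by simp
  have r: "2 * r < m - l" using assms(2,3) by presburger
  show "conv_stab_code (2 ^ (m - l)) (2 ^ (m - l) - 2 * (\<Sum>i = 0..r. (m - l) choose i)) (2 ^ (m - l))
      (rm_stabilizer (m - l) r)"
    using r by (rule conv_stab_code_rm_stabilizer)
  show "free_distance (2 ^ (m - l)) (rm_stabilizer (m - l) r) = 2 ^ (r + 1)"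
    using free_distance_rm_stabilizer[OF r] by simp
  show "pure_code (2 ^ (m - l)) (rm_stabilizer (m - l) r)"
    using r by (rule pure_code_rm_stabilizer)
qed

end
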